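(* Let $|\psi\rangle$ be a normalized $n$-qubit state such that the stabilizer of $|\psi\rangle^{\otimes 2}$ equals $\{\mathbb{1},\mathrm{SWAP}\}$. Let $\epsilon\in(0,1)$, and let $h_1,h_2\in\mathrm{GL}(2,\mathbb{C})$ with $H_1=h_1^\dagger h_1=\mathrm{diag}(1,\epsilon)$ and $H_2=h_2^\dagger h_2=\mathrm{diag}(\epsilon,1)$. Set $|\psi_i\rangle=(\mathbb{1}^{\otimes n-1}\otimes h_i)|\psi\rangle$ and $n_i=\||\psi_i\rangle\|$. Then the maximal success probability of transforming $|\psi\rangle^{\otimes 2}$ into the normalized state $|\psi_1\rangle\otimes|\psi_2\rangle/(n_1n_2)$ by separable operations equals $\frac{2}{1+\epsilon^2}(n_1n_2)^2$, and this probability is attained by an LOCC protocol. This value is strictly larger than $(n_1n_2)^2$, which is the product of the maximal separable-operation success probabilities of the single-state transformations $|\psi\rangle\mapsto|\psi_1\rangle/n_1$ and $|\psi\rangle\mapsto|\psi_2\rangle/n_2$.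
   Context: The two-copy state $|\psi\rangle^{\otimes 2}$ is an $n$-partite state in which party $i$ holds qubit $i$ of both copies (local dimension 4). The stabilizer of $|\psi\rangle^{\otimes 2}$ is the set of $S=\bigotimes_{i=1}^n S^{(i)}$ with $S^{(i)}\in\mathrm{GL}(4,\mathbb{C})$ and $S|\psi\rangle^{\otimes 2}=|\psi\rangle^{\otimes 2}$. $\mathrm{SWAP}=\mathrm{SWAP}^{\otimes n}$, where each party exchanges its two qubits. A separable operation is an operation with Kraus operators of product form $M_k=\bigotimes_i M_k^{(i)}$ with $\sum_k M_k^\dagger M_k\le\mathbb{1}$. Its success probability for a transformation $|a\rangle\mapsto|b\rangle$ of normalized states is $\sum_{k\in K}\|M_k|a\rangle\|^2$, where $K$ is the set of branches satisfying $M_k|a\rangle\propto|b\rangle$. The maximal success probability is the supremum of this over all separable operations. In each transformation the operator $h_i$ acts on the $n$-th party's qubit. *)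

theory Defs
  imports Complex_Main
begin

text \<open>Computational basis
  strings are lists of length n with entries < d; a state is a function on basis strings
  (values outside the basis set are irrelevant / taken to be 0).
  Local operators are d x d matrices given as functions nat => nat => complex
  (only entries with indices < d matter).  A product operator is a family
  M :: nat => (nat => nat => complex), party i < n carrying M i.  Parties are
  numbered 0..n-1, so "the n-th party" is party n-1.\<close>

type_synonym vec = "nat list \<Rightarrow> complex"
type_synonym lmat = "nat \<Rightarrow> nat \<Rightarrow> complex"
type_synonym pop = "nat \<Rightarrow> lmat"

definition Bas :: "nat \<Rightarrow> nat \<Rightarrow> nat list set" where
  "Bas n d = {xs. length xs = n \<and> (\<forall>x\<in>set xs. x < d)}"

definition vnorm :: "nat \<Rightarrow> nat \<Rightarrow> vec \<Rightarrow> real" where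
  "vnorm n d v = sqrt (\<Sum>xs\<in>Bas n d. (cmod (v xs))\<^sup>2)"

definition prod_apply :: "nat \<Rightarrow> nat \<Rightarrow> pop \<Rightarrow> vec \<Rightarrow> vec" where
  "prod_apply n d M v = (\<lambda>ys. if ys \<in> Bas n d
      then (\<Sum>xs\<in>Bas n d. (\<Prod>i<n. M i (ys ! i) (xs ! i)) * v xs) else 0)"

definition idm :: lmat where "idm a b = (if a = b then 1 else 0)"

definition mmul :: "nat \<Rightarrow> lmat \<Rightarrow> lmat \<Rightarrow> lmat" where
  "mmul d A B = (\<lambda>a b. \<Sum>c<d. A a c * B c b)"

definition adj :: "nat \<Rightarrow> lmat \<Rightarrow> lmat" where
  "adj d A = (\<lambda>a b. cnj (A b a))"

definition GL :: "nat \<Rightarrow> lmat set" where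
  "GL d = {A. \<exists>B. (\<forall>a<d. \<forall>b<d. mmul d A B a b = idm a b \<and> mmul d B A a b = idm a b)}"

text \<open>Local SWAP on a party holding two qubits: local basis |b1 b2> has index 2*b1+b2
  (b1: qubit of the first copy, b2: qubit of the second copy).\<close>
definition swap4 :: lmat where
  "swap4 a b = (if a = 2 * (b mod 2) + b div 2 then 1 else 0)"

text \<open>|phi> (x) |chi> of two n-qubit states, regrouped so that party i holds qubit i of
  both states (local dimension 4).\<close>
definition two_copy :: "nat \<Rightarrow> vec \<Rightarrow> vec \<Rightarrow> vec" where
  "two_copy n phi chi = (\<lambda>ys. if ys \<in> Bas n 4
      then phi (map (\<lambda>a. a div 2) ys) * chi (map (\<lambda>a. a mod 2) ys) else 0)"

definition stabilizer :: "nat \<Rightarrow> nat \<Rightarrow> vec \<Rightarrow> (vec \<Rightarrow> vec) set" where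
  "stabilizer n d v = {prod_apply n d S | S. (\<forall>i<n. S i \<in> GL d) \<and> prod_apply n d S v = v}"

text \<open>Separable operation: finite list of product Kraus operators with
  sum_k M_k^dagger M_k <= 1, i.e. sum_k ||M_k v||^2 <= ||v||^2 for all v.\<close>
definition sep_op :: "nat \<Rightarrow> nat \<Rightarrow> pop list \<Rightarrow> bool" where
  "sep_op n d Ms \<longleftrightarrow> (\<forall>v. (\<Sum>M\<leftarrow>Ms. (vnorm n d (prod_apply n d M v))\<^sup>2) \<le> (vnorm n d v)\<^sup>2)"

definition proportional :: "nat \<Rightarrow> nat \<Rightarrow> vec \<Rightarrow> vec \<Rightarrow> bool" where
  "proportional n d u w \<longleftrightarrow> (\<exists>c::complex. \<forall>ys\<in>Bas n d. u ys = c * w ys)"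

definition succ_prob :: "nat \<Rightarrow> nat \<Rightarrow> pop list \<Rightarrow> vec \<Rightarrow> vec \<Rightarrow> real" where
  "succ_prob n d Ms a b =
     (\<Sum>M\<leftarrow>filter (\<lambda>M. proportional n d (prod_apply n d M a) b) Ms.
        (vnorm n d (prod_apply n d M a))\<^sup>2)"

definition max_succ :: "nat \<Rightarrow> nat \<Rightarrow> vec \<Rightarrow> vec \<Rightarrow> real" where
  "max_succ n d a b = Sup {succ_prob n d Ms a b | Ms. sep_op n d Ms}"

text \<open>Local instrument on one party: sum_j A_j^dagger A_j <= 1 on C^d.\<close>
definition local_instr :: "nat \<Rightarrow> lmat list \<Rightarrow> bool" where
  "local_instr d As \<longleftrightarrow> (\<forall>v::nat \<Rightarrow> complex.
     (\<Sum>A\<leftarrow>As. \<Sum>a<d. (cmod (\<Sum>b<d. A a b * v b))\<^sup>2) \<le> (\<Sum>a<d. (cmod (v a))\<^sup>2))"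

text \<open>(Finite-round) LOCC protocols, described by their lists of Kraus operators
  (one per classical outcome history): the trivial protocol, a local (possibly
  trace-decreasing) measurement by a single party, and classically conditioned
  composition (after outcome k of a protocol, run a protocol chosen depending on k).\<close>
inductive LOCC :: "nat \<Rightarrow> nat \<Rightarrow> pop list \<Rightarrow> bool" for n d where
  LOCC_id: "LOCC n d [\<lambda>i. idm]"
| LOCC_local: "p < n \<Longrightarrow> local_instr d As \<Longrightarrow>
     LOCC n d (map (\<lambda>A. \<lambda>i. if i = p then A else idm) As)"
| LOCC_comp: "LOCC n d Ks \<Longrightarrow> (\<forall>k<length Ks. LOCC n d (Ls k)) \<Longrightarrow>
     LOCC n d (concat (map (\<lambda>k. map (\<lambda>L. \<lambda>i. mmul d (L i) ((Ks ! k) i)) (Ls k))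
                        [0..<length Ks]))"

end

theory Submission
  imports Defs "HOL-Library.Function_Algebras"
begin

text \<open>Since the stabilizer of \<open>\<psi>\<^sup>\<otimes>\<^sup>2\<close> is finite, every party's reduced state of \<open>\<psi>\<^sup>\<otimes>\<^sup>2\<close> has full
  rank (otherwise \<open>1 + t P\<close>, with \<open>P\<close> a projector onto a vector annihilating the state, would be
  a stabilizer for every \<open>t\<close>), and \<open>\<psi>\<close> itself has trivial stabilizer. Full local rank forces every
  Kraus operator \<open>M\<close> of a separable operation that maps \<open>\<Phi>\<close> onto a multiple of \<open>G \<Phi>\<close>, with \<open>G\<close>
  a product of invertible local operators, to be of the form \<open>c G S\<close> with \<open>S\<close> in the stabilizer of
  \<open>\<Phi>\<close>. For \<open>\<Phi> = \<psi>\<^sup>\<otimes>\<^sup>2\<close> and \<open>G = 1 \<otimes> \<dots> \<otimes> (h\<^sub>1 \<otimes> h\<^sub>2)\<close>, \<open>S\<close> is \<open>1\<close> or SWAP, which exchanges the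
  basis states \<open>|0\<dots>0,1\<rangle>\<close> and \<open>|0\<dots>0,2\<rangle>\<close>, on which \<open>G\<close> has squared norms \<open>1\<close> and \<open>\<epsilon>\<^sup>2\<close>.
  Completeness of the operation on these two test states gives \<open>\<Sigma> |c|\<^sup>2 (1 + \<epsilon>\<^sup>2) \<le> 2\<close>, i.e. the
  bound \<open>2 (n\<^sub>1 n\<^sub>2)\<^sup>2 / (1 + \<epsilon>\<^sup>2)\<close>. It is attained by the last party measuring
  \<open>{G, G \<cdot> SWAP} / \<surd>(1 + \<epsilon>\<^sup>2)\<close> followed, on the second outcome, by SWAP at every other party.
  For a single copy the stabilizer is trivial and one test state gives the bound \<open>n\<^sub>i\<^sup>2\<close>, attained
  by applying \<open>h\<^sub>i\<close>.\<close>

section \<open>Basis strings\<close>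

lemma Bas_iff: "xs \<in> Bas n d \<longleftrightarrow> length xs = n \<and> (\<forall>i<n. xs ! i < d)"
  by (auto simp: Bas_def all_set_conv_all_nth)

lemma Bas_0 [simp]: "Bas 0 d = {[]}"
  by (auto simp: Bas_def)

lemma Bas_Suc: "Bas (Suc n) d = (\<lambda>(x, xs). x # xs) ` ({..<d} \<times> Bas n d)"
  by (auto simp: Bas_def image_iff length_Suc_conv)

lemma finite_Bas [simp]: "finite (Bas n d)"
  by (induction n) (simp_all add: Bas_Suc)

lemma Bas_list_update:
  assumes "xs \<in> Bas n d" "a < d"
  shows "xs[i := a] \<in> Bas n d"
proof -
  have "xs[i := a] ! j < d" if "j < n" for j
    using assms that by (cases "i = j") (auto simp: Bas_iff)
  then show ?thesis
    using assms by (auto simp: Bas_iff)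
qed

lemma replicate_0_Bas: "0 < d \<Longrightarrow> replicate n 0 \<in> Bas n d"
  by (simp add: Bas_def)

lemma sum_Bas_Suc: "(\<Sum>xs\<in>Bas (Suc n) d. f xs) = (\<Sum>x<d. \<Sum>xs\<in>Bas n d. f (x # xs))"
proof -
  have inj: "inj_on (\<lambda>(x, xs). x # xs) ({..<d} \<times> Bas n d)"
    by (auto simp: inj_on_def)
  have "(\<Sum>xs\<in>Bas (Suc n) d. f xs) = (\<Sum>(x, xs)\<in>{..<d} \<times> Bas n d. f (x # xs))"
    unfolding Bas_Suc by (subst sum.reindex[OF inj]) (simp add: case_prod_beta)
  then show ?thesis
    by (simp add: sum.cartesian_product)
qed

lemma sum_Bas_prod:
  fixes f :: "nat \<Rightarrow> nat \<Rightarrow> 'a::comm_semiring_1"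
  shows "(\<Sum>xs\<in>Bas n d. \<Prod>i<n. f i (xs ! i)) = (\<Prod>i<n. \<Sum>c<d. f i c)"
proof (induction n arbitrary: f)
  case (Suc n)
  have "(\<Sum>xs\<in>Bas (Suc n) d. \<Prod>i<Suc n. f i (xs ! i))
      = (\<Sum>x<d. \<Sum>xs\<in>Bas n d. f 0 x * (\<Prod>i<n. f (Suc i) (xs ! i)))"
    by (simp only: sum_Bas_Suc prod.lessThan_Suc_shift nth_Cons_0 nth_Cons_Suc)
  also have "\<dots> = (\<Sum>x<d. f 0 x * (\<Sum>xs\<in>Bas n d. \<Prod>i<n. f (Suc i) (xs ! i)))"
    by (simp only: sum_distrib_left)
  also have "\<dots> = (\<Sum>x<d. f 0 x) * (\<Prod>i<n. \<Sum>c<d. f (Suc i) c)"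
    using Suc[of "\<lambda>i. f (Suc i)"] by (simp add: sum_distrib_right)
  also have "\<dots> = (\<Prod>i<Suc n. \<Sum>c<d. f i c)"
    by (simp only: prod.lessThan_Suc_shift)
  finally show ?case .
qed simp

lemma sum_Bas_split_party:
  assumes p: "p < n" and d: "0 < d"
  shows "(\<Sum>ys\<in>Bas n d. f ys) = (\<Sum>zs\<in>{zs\<in>Bas n d. zs ! p = 0}. \<Sum>a<d. f (zs[p := a]))"
proof -
  define Z where "Z = {zs\<in>Bas n d. zs ! p = 0}"
  define g where "g = (\<lambda>(zs::nat list, a::nat). zs[p := a])"
  have len: "length zs = n" if "zs \<in> Z" for zs
    using that by (simp add: Z_def Bas_iff)
  have "inj_on g (Z \<times> {..<d})"
  proof (rule inj_onI, clarify)
    fix zs a zs' a' assume zs: "zs \<in> Z" "zs' \<in> Z" and eq: "g (zs, a) = g (zs', a')"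
    then have "zs[p := a] = zs'[p := a']"
      by (simp add: g_def)
    moreover have "zs = (zs[p := a])[p := 0]" "zs' = (zs'[p := a'])[p := 0]"
      using zs by (simp_all add: Z_def) (metis list_update_id)+
    ultimately show "zs = zs' \<and> a = a'"
      using len[OF zs(1)] p by (metis nth_list_update_eq)
  qed
  moreover have "g ` (Z \<times> {..<d}) = Bas n d"
  proof
    show "g ` (Z \<times> {..<d}) \<subseteq> Bas n d"
      by (auto simp: g_def Z_def intro: Bas_list_update)
    show "Bas n d \<subseteq> g ` (Z \<times> {..<d})"
    proof
      fix ys assume ys: "ys \<in> Bas n d"
      moreover have "length ys = n"
        using ys by (simp add: Bas_iff)
      ultimately have "ys[p := 0] \<in> Z" "ys ! p < d" "ys = g (ys[p := 0], ys ! p)"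
        using p d by (simp_all add: Z_def g_def Bas_list_update) (simp add: Bas_iff)
      then show "ys \<in> g ` (Z \<times> {..<d})"
        by blast
    qed
  qed
  ultimately have "(\<Sum>ys\<in>Bas n d. f ys) = (\<Sum>x\<in>Z \<times> {..<d}. f (g x))"
    by (metis sum.reindex comp_apply[of f g] sum.cong)
  then show ?thesis
    by (simp add: g_def Z_def sum.cartesian_product case_prod_beta)
qed

lemma sum_Bas_4:
  fixes F :: "nat list \<Rightarrow> nat list \<Rightarrow> 'a::comm_monoid_add"
  shows "(\<Sum>xs\<in>Bas n 4. F (map (\<lambda>a. a div 2) xs) (map (\<lambda>a. a mod 2) xs))
       = (\<Sum>p\<in>Bas n 2. \<Sum>q\<in>Bas n 2. F p q)"
proof (induction n arbitrary: F)
  case (Suc n)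
  have "{..<4::nat} = {0, 1, 2, 3}" "{..<2::nat} = {0, 1}"
    by auto
  then show ?case
    by (simp add: sum_Bas_Suc Suc[of "\<lambda>p q. F (_ # p) (_ # q)"] sum.distrib add_ac)
qed simp

section \<open>Product operators\<close>

abbreviation on_party :: "nat \<Rightarrow> lmat \<Rightarrow> pop" where
  "on_party p A \<equiv> \<lambda>i. if i = p then A else idm"

definition ket :: "nat list \<Rightarrow> vec" where
  "ket x = (\<lambda>ys. if ys = x then 1 else 0)"

lemma prod_apply_outside: "ys \<notin> Bas n d \<Longrightarrow> prod_apply n d M v ys = 0"
  by (simp add: prod_apply_def)

lemma prod_apply_cong:
  assumes "\<And>i a b. i < n \<Longrightarrow> a < d \<Longrightarrow> b < d \<Longrightarrow> A i a b = B i a b"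
    and "\<And>ys. ys \<in> Bas n d \<Longrightarrow> v ys = w ys"
  shows "prod_apply n d A v = prod_apply n d B w"
proof
  fix ys
  have "(\<Prod>i<n. A i (ys ! i) (xs ! i)) * v xs = (\<Prod>i<n. B i (ys ! i) (xs ! i)) * w xs"
    if "ys \<in> Bas n d" "xs \<in> Bas n d" for xs
    using that assms by (auto simp: Bas_iff intro!: prod.cong)
  then show "prod_apply n d A v ys = prod_apply n d B w ys"
    by (simp add: prod_apply_def)
qed

lemma prod_apply_smult: "prod_apply n d A (\<lambda>ys. k * v ys) = (\<lambda>ys. k * prod_apply n d A v ys)"
  unfolding prod_apply_def by (auto simp: sum_distrib_left mult_ac)

lemma prod_apply_zero: "prod_apply n d A (\<lambda>ys. 0) = (\<lambda>ys. 0)"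
  using prod_apply_smult[of n d A 0 "\<lambda>ys. 0"] by simp

lemma prod_apply_mmul:
  "prod_apply n d A (prod_apply n d B v) = prod_apply n d (\<lambda>i. mmul d (A i) (B i)) v"
proof
  fix ys
  show "prod_apply n d A (prod_apply n d B v) ys = prod_apply n d (\<lambda>i. mmul d (A i) (B i)) v ys"
  proof (cases "ys \<in> Bas n d")
    case True
    have entry: "(\<Sum>xs\<in>Bas n d. (\<Prod>i<n. A i (ys ! i) (xs ! i)) * (\<Prod>i<n. B i (xs ! i) (zs ! i)))
        = (\<Prod>i<n. mmul d (A i) (B i) (ys ! i) (zs ! i))" for zs
      using sum_Bas_prod[of "\<lambda>i c. A i (ys ! i) c * B i c (zs ! i)" n d]
      by (simp add: prod.distrib mmul_def)
    have "prod_apply n d A (prod_apply n d B v) ys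
        = (\<Sum>xs\<in>Bas n d. \<Sum>zs\<in>Bas n d.
             (\<Prod>i<n. A i (ys ! i) (xs ! i)) * (\<Prod>i<n. B i (xs ! i) (zs ! i)) * v zs)"
      using True by (simp add: prod_apply_def sum_distrib_left mult.assoc)
    also have "\<dots> = (\<Sum>zs\<in>Bas n d. (\<Sum>xs\<in>Bas n d.
             (\<Prod>i<n. A i (ys ! i) (xs ! i)) * (\<Prod>i<n. B i (xs ! i) (zs ! i))) * v zs)"
      by (subst sum.swap) (simp add: sum_distrib_right)
    also have "\<dots> = prod_apply n d (\<lambda>i. mmul d (A i) (B i)) v ys"
      using True by (simp add: entry prod_apply_def)
    finally show ?thesis .
  qed (simp add: prod_apply_def)
qed

lemma prod_idm_Bas:
  assumes "xs \<in> Bas n d" "ys \<in> Bas n d"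
  shows "(\<Prod>j<n. idm (ys ! j) (xs ! j)) = (if xs = ys then 1 else 0)"
proof -
  have "xs = ys \<longleftrightarrow> (\<forall>j<n. ys ! j = xs ! j)"
    using assms by (auto simp: Bas_iff intro: nth_equalityI)
  then show ?thesis
    by (auto simp: idm_def)
qed

lemma prod_apply_idm: "prod_apply n d (\<lambda>i. idm) v = (\<lambda>ys. if ys \<in> Bas n d then v ys else 0)"
proof
  fix ys
  show "prod_apply n d (\<lambda>i. idm) v ys = (if ys \<in> Bas n d then v ys else 0)"
  proof (cases "ys \<in> Bas n d")
    case True
    then have "(\<Prod>j<n. idm (ys ! j) (xs ! j)) * v xs = (if xs = ys then v xs else 0)"
      if "xs \<in> Bas n d" for xs
      using that by (simp add: prod_idm_Bas)
    then show ?thesis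
      using True by (simp add: prod_apply_def cong: sum.cong)
  qed (simp add: prod_apply_outside)
qed

lemma prod_apply_idm_supported:
  "\<forall>xs. xs \<notin> Bas n d \<longrightarrow> v xs = 0 \<Longrightarrow> prod_apply n d (\<lambda>i. idm) v = v"
  by (auto simp: prod_apply_idm)

lemma prod_apply_restrict: "prod_apply n d A (prod_apply n d (\<lambda>i. idm) v) = prod_apply n d A v"
  by (rule prod_apply_cong) (simp_all add: prod_apply_idm)

lemma prod_apply_ket:
  assumes "x \<in> Bas n d" "ys \<in> Bas n d"
  shows "prod_apply n d A (ket x) ys = (\<Prod>j<n. A j (ys ! j) (x ! j))"
  using assms by (simp add: prod_apply_def ket_def if_distrib[where f="\<lambda>z. _ * z"] sum.delta' cong: if_cong)

lemma prod_on_party: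
  assumes "i < n" "xs \<in> Bas n d" "ys \<in> Bas n d"
  shows "(\<Prod>j<n. on_party i A j (ys ! j) (xs ! j)) = (if xs = ys[i := xs ! i] then A (ys ! i) (xs ! i) else 0)"
proof -
  have "(\<Prod>j<n. on_party i A j (ys ! j) (xs ! j)) = A (ys ! i) (xs ! i) * (\<Prod>j\<in>{..<n} - {i}. idm (ys ! j) (xs ! j))"
    using assms by (subst prod.remove[of _ i]) (auto intro!: prod.cong)
  moreover have "xs = ys[i := xs ! i] \<longleftrightarrow> (\<forall>j\<in>{..<n} - {i}. ys ! j = xs ! j)"
  proof
    assume xs: "xs = ys[i := xs ! i]"
    show "\<forall>j\<in>{..<n} - {i}. ys ! j = xs ! j"
      by (subst xs) simp
  next
    assume "\<forall>j\<in>{..<n} - {i}. ys ! j = xs ! j"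
    then show "xs = ys[i := xs ! i]"
      using assms by (intro nth_equalityI) (auto simp: Bas_iff nth_list_update)
  qed
  ultimately show ?thesis
    by (auto simp: idm_def)
qed

lemma prod_apply_on_party:
  assumes i: "i < n"
  shows "prod_apply n d (on_party i A) v
       = (\<lambda>ys. if ys \<in> Bas n d then (\<Sum>b<d. A (ys ! i) b * v (ys[i := b])) else 0)"
proof
  fix ys
  show "prod_apply n d (on_party i A) v ys
      = (if ys \<in> Bas n d then (\<Sum>b<d. A (ys ! i) b * v (ys[i := b])) else 0)"
  proof (cases "ys \<in> Bas n d")
    case True
    let ?slice = "(\<lambda>b. ys[i := b]) ` {..<d}"
    have slice: "?slice \<subseteq> Bas n d"
      using True by (auto intro: Bas_list_update)
    have inj: "inj_on (\<lambda>b. ys[i := b]) {..<d}"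
      using True i unfolding inj_on_def Bas_iff by (metis nth_list_update_eq)
    have "prod_apply n d (on_party i A) v ys
        = (\<Sum>xs\<in>Bas n d. if xs = ys[i := xs ! i] then A (ys ! i) (xs ! i) * v xs else 0)"
      using True i unfolding prod_apply_def by (auto simp: prod_on_party intro!: sum.cong)
    also have "\<dots> = (\<Sum>xs\<in>?slice. if xs = ys[i := xs ! i] then A (ys ! i) (xs ! i) * v xs else 0)"
    proof (rule sum.mono_neutral_right[OF finite_Bas slice], intro ballI)
      fix xs assume xs: "xs \<in> Bas n d - ?slice"
      then have "xs ! i < d"
        using i by (simp add: Bas_iff)
      then show "(if xs = ys[i := xs ! i] then A (ys ! i) (xs ! i) * v xs else 0) = 0"
        using xs by auto
    qed
    also have "\<dots> = (\<Sum>b<d. A (ys ! i) b * v (ys[i := b]))"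
      using inj True i by (simp add: sum.reindex Bas_iff)
    finally show ?thesis
      using True by simp
  qed (simp add: prod_apply_def)
qed

lemma prod_apply_scale_party:
  assumes "j < n"
  shows "prod_apply n d (M(j := (\<lambda>a b. k * M j a b))) v = (\<lambda>ys. k * prod_apply n d M v ys)"
proof -
  have factor: "(\<Prod>i<n. (M(j := (\<lambda>a b. k * M j a b))) i (ys ! i) (xs ! i))
      = k * (\<Prod>i<n. M i (ys ! i) (xs ! i))" for xs ys
  proof -
    have "(\<Prod>i<n. (M(j := (\<lambda>a b. k * M j a b))) i (ys ! i) (xs ! i))
        = k * M j (ys ! j) (xs ! j) * (\<Prod>i\<in>{..<n} - {j}. M i (ys ! i) (xs ! i))"
      using assms by (subst prod.remove[of _ j]) (auto intro!: prod.cong)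
    also have "\<dots> = k * (\<Prod>i<n. M i (ys ! i) (xs ! i))"
      using assms by (subst (2) prod.remove[of _ j]) auto
    finally show ?thesis .
  qed
  show ?thesis
    unfolding prod_apply_def factor by (simp add: fun_eq_iff sum_distrib_left mult.assoc)
qed

lemma prod_apply_on_party_ket:
  assumes "i < n" "a < d" "b < d"
  shows "prod_apply n d (on_party i A) (ket ((replicate n 0)[i := b])) ((replicate n 0)[i := a]) = A a b"
proof -
  have "(replicate n 0)[i := a] \<in> Bas n d"
    using assms by (intro Bas_list_update replicate_0_Bas) auto
  moreover have "(replicate n (0::nat))[i := b'] = (replicate n 0)[i := b] \<longleftrightarrow> b' = b" for b'
    using assms(1) by (metis length_replicate nth_list_update_eq)
  ultimately have "prod_apply n d (on_party i A) (ket ((replicate n 0)[i := b])) ((replicate n 0)[i := a])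
      = (\<Sum>b'<d. A a b' * (if b' = b then 1 else 0))"
    using assms by (simp add: prod_apply_on_party ket_def)
  also have "\<dots> = (\<Sum>b'<d. if b' = b then A a b' else 0)"
    by (rule sum.cong) auto
  finally show ?thesis
    using assms by simp
qed

lemma prod_apply_swap4_ket:
  assumes "x \<in> Bas n 4"
  shows "prod_apply n 4 (\<lambda>i. swap4) (ket x) = ket (map (\<lambda>a. 2 * (a mod 2) + a div 2) x)"
proof
  fix ys
  let ?x' = "map (\<lambda>a. 2 * (a mod 2) + a div 2) x"
  have "?x' \<in> Bas n 4"
    using assms by (auto simp: Bas_def)
  moreover have "(\<Prod>j<n. swap4 (ys ! j) (x ! j)) = (if ys = ?x' then 1 else 0)" if "ys \<in> Bas n 4"
  proof -
    have "ys = ?x' \<longleftrightarrow> (\<forall>j<n. ys ! j = 2 * (x ! j mod 2) + x ! j div 2)"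
      using assms that by (auto simp: Bas_iff intro: nth_equalityI)
    then show ?thesis
      by (auto simp: swap4_def)
  qed
  ultimately show "prod_apply n 4 (\<lambda>i. swap4) (ket x) ys = ket ?x' ys"
    using assms by (cases "ys \<in> Bas n 4") (simp_all add: prod_apply_ket prod_apply_outside, auto simp: ket_def)
qed

lemma vnorm_sq: "(vnorm n d v)\<^sup>2 = (\<Sum>ys\<in>Bas n d. (cmod (v ys))\<^sup>2)"
  unfolding vnorm_def by (simp add: sum_nonneg)

lemma vnorm_nonneg: "vnorm n d v \<ge> 0"
  unfolding vnorm_def by (simp add: sum_nonneg)

lemma vnorm_cong: "(\<And>ys. ys \<in> Bas n d \<Longrightarrow> v ys = w ys) \<Longrightarrow> vnorm n d v = vnorm n d w"
  unfolding vnorm_def by (metis (no_types, lifting) sum.cong)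

lemma vnorm_zero: "vnorm n d (\<lambda>ys. 0) = 0"
  by (simp add: vnorm_def)

lemma vnorm_smult: "vnorm n d (\<lambda>ys. k * v ys) = cmod k * vnorm n d v"
proof -
  have "(\<Sum>ys\<in>Bas n d. (cmod (k * v ys))\<^sup>2) = (cmod k)\<^sup>2 * (\<Sum>ys\<in>Bas n d. (cmod (v ys))\<^sup>2)"
    by (simp add: norm_mult power_mult_distrib sum_distrib_left)
  then show ?thesis
    unfolding vnorm_def by (simp add: real_sqrt_mult)
qed

lemma vnorm_eq_0_imp: "vnorm n d v = 0 \<Longrightarrow> ys \<in> Bas n d \<Longrightarrow> v ys = 0"
  using vnorm_sq[of n d v] by (simp add: sum_nonneg_eq_0_iff)

lemma vnorm_ket: "x \<in> Bas n d \<Longrightarrow> vnorm n d (ket x) = 1"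
  by (simp add: vnorm_def ket_def if_distrib[of "\<lambda>z. (cmod z)\<^sup>2"] cong: if_cong)

lemma vnorm_prod_apply_ket:
  assumes "x \<in> Bas n d"
  shows "(vnorm n d (prod_apply n d A (ket x)))\<^sup>2 = (\<Prod>j<n. \<Sum>a<d. (cmod (A j a (x ! j)))\<^sup>2)"
proof -
  have "(vnorm n d (prod_apply n d A (ket x)))\<^sup>2 = (\<Sum>ys\<in>Bas n d. \<Prod>j<n. (cmod (A j (ys ! j) (x ! j)))\<^sup>2)"
    using assms by (simp add: vnorm_sq prod_apply_ket prod_norm[symmetric] prod_power_distrib)
  also have "\<dots> = (\<Prod>j<n. \<Sum>a<d. (cmod (A j a (x ! j)))\<^sup>2)"
    by (rule sum_Bas_prod)
  finally show ?thesis .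
qed

lemma vnorm_on_party_ket:
  assumes "p < n" "e < d"
  shows "(vnorm n d (prod_apply n d (on_party p A) (ket ((replicate n 0)[p := e]))))\<^sup>2
       = (\<Sum>a<d. (cmod (A a e))\<^sup>2)"
proof -
  let ?x = "(replicate n 0)[p := e]"
  define f where "f j = (\<Sum>a<d. (cmod (on_party p A j a (?x ! j)))\<^sup>2)" for j
  have "f j = 1" if "j \<in> {..<n} - {p}" for j
    using that assms by (simp add: f_def idm_def if_distrib[of "\<lambda>z. (cmod z)\<^sup>2"] cong: if_cong)
  then have "(\<Prod>j<n. f j) = f p"
    using assms by (simp add: prod.remove[of _ p])
  moreover have "?x \<in> Bas n d"
    using assms by (intro Bas_list_update replicate_0_Bas) auto
  ultimately show ?thesis
    using assms by (simp add: vnorm_prod_apply_ket f_def)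
qed

section \<open>Invertible local matrices\<close>

lemma sum_idm_left: "a < d \<Longrightarrow> (\<Sum>c<d. idm a c * X c) = X a"
  by (simp add: idm_def if_distrib[where f="\<lambda>z. z * _"] cong: if_cong)

lemma sum_idm_right: "b < d \<Longrightarrow> (\<Sum>c<d. X c * idm c b) = X b"
  by (simp add: idm_def if_distrib[where f="\<lambda>z. _ * z"] cong: if_cong)

lemma mmul_idm_left: "a < d \<Longrightarrow> mmul d idm A a b = A a b"
  by (simp add: mmul_def sum_idm_left)

lemma mmul_idm_right: "b < d \<Longrightarrow> mmul d A idm a b = A a b"
  by (simp add: mmul_def sum_idm_right)

lemma mmul_assoc: "mmul d (mmul d A B) C a b = mmul d A (mmul d B C) a b"
proof -
  have "mmul d (mmul d A B) C a b = (\<Sum>c<d. \<Sum>e<d. A a e * (B e c * C c b))"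
    unfolding mmul_def by (simp add: sum_distrib_right mult.assoc)
  also have "\<dots> = mmul d A (mmul d B C) a b"
    unfolding mmul_def by (subst sum.swap) (simp add: sum_distrib_left)
  finally show ?thesis .
qed

lemma mmul_cong:
  "(\<And>c. c < d \<Longrightarrow> A a c = A' a c) \<Longrightarrow> (\<And>c. c < d \<Longrightarrow> B c b = B' c b)
    \<Longrightarrow> mmul d A B a b = mmul d A' B' a b"
  unfolding mmul_def by (auto intro!: sum.cong)

lemma idm_GL: "idm \<in> GL d"
  unfolding GL_def by (auto simp: mmul_idm_left)

lemma GL_smult: "A \<in> GL d \<Longrightarrow> k \<noteq> 0 \<Longrightarrow> (\<lambda>a b. k * A a b) \<in> GL d"
proof -
  assume A: "A \<in> GL d" and k: "k \<noteq> 0"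
  obtain B where B: "\<forall>a<d. \<forall>b<d. mmul d A B a b = idm a b \<and> mmul d B A a b = idm a b"
    using A by (auto simp: GL_def)
  have "mmul d (\<lambda>a b. k * A a b) (\<lambda>a b. inverse k * B a b) a b = mmul d A B a b"
       "mmul d (\<lambda>a b. inverse k * B a b) (\<lambda>a b. k * A a b) a b = mmul d B A a b" for a b
    using k unfolding mmul_def by (auto simp: sum_distrib_left intro!: sum.cong)
  then show ?thesis
    using B unfolding GL_def by (intro CollectI exI[of _ "\<lambda>a b. inverse k * B a b"]) simp
qed

lemma GL_idm_add_idempotent:
  assumes P: "\<forall>a<d. \<forall>b<d. mmul d P P a b = P a b" and t: "t \<noteq> -1"
  shows "(\<lambda>a b. idm a b + t * P a b) \<in> GL d"
proof -
  have mult: "mmul d (\<lambda>a b. idm a b + x * P a b) (\<lambda>a b. idm a b + y * P a b) a b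
      = idm a b + (x + y + x * y) * P a b" if "a < d" "b < d" for a b x y
  proof -
    have "mmul d (\<lambda>a b. idm a b + x * P a b) (\<lambda>a b. idm a b + y * P a b) a b
        = mmul d idm idm a b + y * mmul d idm P a b + x * mmul d P idm a b + x * y * mmul d P P a b"
      unfolding mmul_def by (simp add: algebra_simps sum.distrib sum_distrib_left)
    then show ?thesis
      using that P by (simp add: mmul_idm_left mmul_idm_right algebra_simps)
  qed
  define s where "s = - t / (1 + t)"
  have "t + s + t * s = 0" "s + t + s * t = 0"
    using t by (simp_all add: s_def field_simps add_eq_0_iff)
  then have "mmul d (\<lambda>a b. idm a b + t * P a b) (\<lambda>a b. idm a b + s * P a b) a b = idm a b"
    "mmul d (\<lambda>a b. idm a b + s * P a b) (\<lambda>a b. idm a b + t * P a b) a b = idm a b"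
    if "a < d" "b < d" for a b
    using mult[OF that, of t s] mult[OF that, of s t] by simp_all
  then show ?thesis
    unfolding GL_def by (intro CollectI exI[of _ "\<lambda>a b. idm a b + s * P a b"]) simp
qed

lemma GL_inverses:
  assumes "\<forall>i<n. A i \<in> GL d"
  obtains B where "\<forall>i<n. \<forall>a<d. \<forall>b<d. mmul d (A i) (B i) a b = idm a b \<and> mmul d (B i) (A i) a b = idm a b"
proof -
  have "\<forall>i. \<exists>B. i < n \<longrightarrow> (\<forall>a<d. \<forall>b<d. mmul d (A i) B a b = idm a b \<and> mmul d B (A i) a b = idm a b)"
    using assms by (simp add: GL_def)
  then show thesis
    using that by (metis choice)
qed

lemma prod_apply_inverse:
  assumes "\<forall>i<n. \<forall>a<d. \<forall>b<d. mmul d (A i) (B i) a b = idm a b"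
  shows "prod_apply n d A (prod_apply n d B v) = (\<lambda>ys. if ys \<in> Bas n d then v ys else 0)"
proof -
  have "prod_apply n d (\<lambda>i. mmul d (A i) (B i)) v = prod_apply n d (\<lambda>i. idm) v"
    using assms by (intro prod_apply_cong) auto
  then show ?thesis
    by (simp add: prod_apply_mmul prod_apply_idm)
qed

lemma vnorm_on_party_pos:
  assumes p: "p < n" and h: "h \<in> GL d" and supp: "\<forall>xs. xs \<notin> Bas n d \<longrightarrow> psi xs = 0"
    and nonzero: "vnorm n d psi \<noteq> 0"
  shows "vnorm n d (prod_apply n d (on_party p h) psi) > 0"
proof (rule ccontr)
  assume "\<not> ?thesis"
  then have "vnorm n d (prod_apply n d (on_party p h) psi) = 0"
    using vnorm_nonneg[of n d "prod_apply n d (on_party p h) psi"] by linarith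
  then have zero: "prod_apply n d (on_party p h) psi = (\<lambda>ys. 0)"
    using vnorm_eq_0_imp[of n d "prod_apply n d (on_party p h) psi"]
    by (metis prod_apply_outside)
  obtain H where H: "\<forall>i<n. \<forall>a<d. \<forall>b<d. mmul d (H i) (on_party p h i) a b = idm a b"
    using GL_inverses[of n "on_party p h" d] h idm_GL by (metis (no_types, lifting))
  have "psi = prod_apply n d H (prod_apply n d (on_party p h) psi)"
    using supp by (auto simp: prod_apply_inverse[OF H])
  then have "psi = (\<lambda>ys. 0)"
    by (simp add: zero prod_apply_zero)
  then show False
    using nonzero by (simp add: vnorm_zero)
qed

definition rows_indep :: "nat \<Rightarrow> lmat \<Rightarrow> bool" where
  "rows_indep d A \<longleftrightarrow> (\<forall>w. (\<forall>b<d. (\<Sum>a<d. w a * A a b) = 0) \<longrightarrow> (\<forall>a<d. w a = 0))"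

lemma rows_indepD:
  assumes "rows_indep d A" "\<And>b. b < d \<Longrightarrow> (\<Sum>a<d. w a * A a b) = 0" "a < d"
  shows "w a = 0"
proof -
  have "(\<forall>b<d. (\<Sum>a<d. w a * A a b) = 0) \<longrightarrow> (\<forall>a<d. w a = 0)"
    using assms(1) unfolding rows_indep_def by (rule spec)
  then show ?thesis
    using assms(2,3) by simp
qed

interpretation fun_space: vector_space "\<lambda>(c::complex) (f::nat \<Rightarrow> complex) x. c * f x"
  by unfold_locales (auto simp: algebra_simps fun_eq_iff)

lemma sum_fun_apply: "(\<Sum>v\<in>T. f v) (x::nat) = (\<Sum>v\<in>T. f v x :: complex)"
  by (induction T rule: infinite_finite_induct) auto

text \<open>Rows are cut off at \<open>d\<close> so that they lie in the span of the unit vectors \<open>idm b\<close>, \<open>b < d\<close>.\<close>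

definition cut_row :: "nat \<Rightarrow> lmat \<Rightarrow> nat \<Rightarrow> nat \<Rightarrow> complex" where
  "cut_row d A a = (\<lambda>c. if c < d then A a c else 0)"

lemma sum_cut_row_apply:
  "(\<Sum>a<d. (\<lambda>c. w a * cut_row d A a c)) c = (if c < d then \<Sum>a<d. w a * A a c else 0)"
  by (simp add: sum_fun_apply cut_row_def)

lemma inj_on_cut_row:
  assumes indep: "rows_indep d A"
  shows "inj_on (cut_row d A) {..<d}"
proof (rule inj_onI, rule ccontr)
  fix a a' assume a: "a \<in> {..<d}" "a' \<in> {..<d}" "cut_row d A a = cut_row d A a'" "a \<noteq> a'"
  let ?w = "\<lambda>x. idm a x - idm a' x"
  have "A a c = A a' c" if "c < d" for c
    using fun_cong[OF a(3), of c] that by (simp add: cut_row_def)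
  then have "(\<Sum>x<d. ?w x * A x c) = 0" if "c < d" for c
    using a(1,2) that by (simp add: left_diff_distrib sum_subtractf sum_idm_left)
  then have "?w a = 0"
    using a(1) by (intro rows_indepD[OF indep, of "?w" a]) auto
  with a(4) show False
    by (simp add: idm_def)
qed

lemma independent_cut_rows:
  assumes indep: "rows_indep d A"
  shows "fun_space.independent (cut_row d A ` {..<d})"
proof
  assume "fun_space.dependent (cut_row d A ` {..<d})"
  then obtain u where u: "\<exists>v\<in>cut_row d A ` {..<d}. u v \<noteq> 0"
    and "(\<Sum>v\<in>cut_row d A ` {..<d}. (\<lambda>c. u v * v c)) = 0"
    using fun_space.dependent_finite[of "cut_row d A ` {..<d}"] by blast
  then have zero: "(\<Sum>a<d. (\<lambda>c. u (cut_row d A a) * cut_row d A a c)) = 0"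
    by (simp add: sum.reindex[OF inj_on_cut_row[OF indep]])
  have "(\<Sum>a<d. u (cut_row d A a) * A a c) = 0" if "c < d" for c
    using fun_cong[OF zero, of c] sum_cut_row_apply[where w = "\<lambda>a. u (cut_row d A a)" and c = c] that by simp
  then have "\<forall>a<d. u (cut_row d A a) = 0"
    using rows_indepD[OF indep, of "\<lambda>a. u (cut_row d A a)"] by blast
  then show False
    using u by auto
qed

lemma cut_rows_in_span: "cut_row d A ` {..<d} \<subseteq> fun_space.span (idm ` {..<d})"
proof clarify
  fix a
  have "cut_row d A a = (\<Sum>c<d. (\<lambda>x. A a c * idm c x))"
    by (auto simp: sum_fun_apply cut_row_def idm_def if_distrib[where f="\<lambda>z. _ * z"] cong: if_cong)
  also have "\<dots> \<in> fun_space.span (idm ` {..<d})"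
    by (intro fun_space.span_sum fun_space.span_scale fun_space.span_base) simp
  finally show "cut_row d A a \<in> fun_space.span (idm ` {..<d})" .
qed

text \<open>Otherwise \<open>idm b\<close> together with the \<open>d\<close> rows would be \<open>d + 1\<close> independent vectors in the
  span of \<open>d\<close> unit vectors.\<close>

lemma unit_in_span_cut_rows:
  assumes indep: "rows_indep d A" and b: "b < d"
  shows "idm b \<in> fun_space.span (cut_row d A ` {..<d})"
proof (rule ccontr)
  assume not_span: "idm b \<notin> fun_space.span (cut_row d A ` {..<d})"
  have new: "idm b \<notin> cut_row d A ` {..<d}"
    using not_span fun_space.span_base by (rule contrapos_nn)
  have "fun_space.independent (insert (idm b) (cut_row d A ` {..<d}))"
    using independent_cut_rows[OF indep] not_span by (simp add: fun_space.independent_insert)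
  moreover have "insert (idm b) (cut_row d A ` {..<d}) \<subseteq> fun_space.span (idm ` {..<d})"
    using cut_rows_in_span b by (auto intro: fun_space.span_base)
  ultimately have "card (insert (idm b) (cut_row d A ` {..<d})) \<le> card (idm ` {..<d})"
    using fun_space.independent_span_bound by blast
  also have "\<dots> \<le> d"
    using card_image_le[of "{..<d}" idm] by simp
  finally show False
    using new card_image[OF inj_on_cut_row[OF indep]] by simp
qed

lemma rows_indep_imp_left_inverse:
  assumes indep: "rows_indep d A"
  shows "\<exists>C. \<forall>b<d. \<forall>c<d. mmul d C A b c = idm b c"
proof -
  have "\<exists>u. \<forall>c<d. (\<Sum>a<d. u a * A a c) = idm b c" if b: "b < d" for b
  proof -
    obtain u where "(\<Sum>v\<in>cut_row d A ` {..<d}. (\<lambda>c. u v * v c)) = idm b"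
      using unit_in_span_cut_rows[OF indep b] by (auto simp: fun_space.span_finite)
    then have unit: "(\<Sum>a<d. (\<lambda>c. u (cut_row d A a) * cut_row d A a c)) = idm b"
      by (simp add: sum.reindex[OF inj_on_cut_row[OF indep]])
    have "(\<Sum>a<d. u (cut_row d A a) * A a c) = idm b c" if "c < d" for c
      using fun_cong[OF unit, of c] sum_cut_row_apply[where w = "\<lambda>a. u (cut_row d A a)" and c = c] that by simp
    then show ?thesis
      by (intro exI[of _ "\<lambda>a. u (cut_row d A a)"]) blast
  qed
  then have "\<forall>b. \<exists>u. b < d \<longrightarrow> (\<forall>c<d. (\<Sum>a<d. u a * A a c) = idm b c)"
    by blast
  from choice[OF this] obtain C where "\<forall>b<d. \<forall>c<d. (\<Sum>a<d. C b a * A a c) = idm b c"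
    by blast
  then show ?thesis
    by (auto simp: mmul_def)
qed

lemma left_inverse_imp_rows_indep:
  assumes CA: "\<forall>b<d. \<forall>c<d. mmul d C A b c = idm b c"
  shows "rows_indep d C"
  unfolding rows_indep_def
proof (intro allI impI)
  fix w c assume w: "\<forall>b<d. (\<Sum>a<d. w a * C a b) = 0" and c: "c < d"
  have "w c = (\<Sum>b<d. w b * mmul d C A b c)"
    using CA c by (simp add: sum_idm_right)
  also have "\<dots> = (\<Sum>b<d. \<Sum>a<d. w b * C b a * A a c)"
    unfolding mmul_def by (simp add: sum_distrib_left mult.assoc)
  also have "\<dots> = (\<Sum>a<d. (\<Sum>b<d. w b * C b a) * A a c)"
    by (subst sum.swap) (simp add: sum_distrib_right)
  also have "\<dots> = 0"
    using w by simp
  finally show "w c = 0" .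
qed

lemma rows_indep_imp_GL:
  assumes "rows_indep d A"
  shows "A \<in> GL d"
proof -
  obtain C where CA: "\<forall>b<d. \<forall>c<d. mmul d C A b c = idm b c"
    using rows_indep_imp_left_inverse[OF assms] by blast
  obtain D where DC: "\<forall>b<d. \<forall>c<d. mmul d D C b c = idm b c"
    using rows_indep_imp_left_inverse[OF left_inverse_imp_rows_indep[OF CA]] by blast
  have DA: "D a b = A a b" if "a < d" "b < d" for a b
  proof -
    have "D a b = mmul d D idm a b"
      using that by (simp add: mmul_idm_right)
    also have "\<dots> = mmul d D (mmul d C A) a b"
      by (rule mmul_cong) (use CA that in auto)
    also have "\<dots> = mmul d (mmul d D C) A a b"
      by (simp add: mmul_assoc)
    also have "\<dots> = mmul d idm A a b"
      by (rule mmul_cong) (use DC that in auto)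
    also have "\<dots> = A a b"
      using that by (simp add: mmul_idm_left)
    finally show ?thesis .
  qed
  have "mmul d A C a b = idm a b" if "a < d" "b < d" for a b
  proof -
    have "mmul d A C a b = mmul d D C a b"
      by (rule mmul_cong) (use DA that in auto)
    then show ?thesis
      using DC that by simp
  qed
  then show ?thesis
    using CA unfolding GL_def by blast
qed

section \<open>Full local rank and stabilizers\<close>

text \<open>Equivalently, every single-party reduced state of \<open>v\<close> has full rank.\<close>

definition full_local_rank :: "nat \<Rightarrow> nat \<Rightarrow> vec \<Rightarrow> bool" where
  "full_local_rank n d v \<longleftrightarrow>
     (\<forall>i<n. \<forall>w. (\<forall>ys\<in>Bas n d. (\<Sum>a<d. w a * v (ys[i := a])) = 0) \<longrightarrow> (\<forall>a<d. w a = 0))"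

lemma full_local_rankD:
  assumes "full_local_rank n d v" "i < n" "\<forall>ys\<in>Bas n d. (\<Sum>a<d. w a * v (ys[i := a])) = 0" "a < d"
  shows "w a = 0"
proof -
  have "\<forall>w. (\<forall>ys\<in>Bas n d. (\<Sum>a<d. w a * v (ys[i := a])) = 0) \<longrightarrow> (\<forall>a<d. w a = 0)"
    using assms(1,2) unfolding full_local_rank_def by blast
  then have "(\<forall>ys\<in>Bas n d. (\<Sum>a<d. w a * v (ys[i := a])) = 0) \<longrightarrow> (\<forall>a<d. w a = 0)"
    by (rule spec)
  then show ?thesis
    using assms(3,4) by simp
qed

lemma stabilizerI:
  "\<forall>i<n. S i \<in> GL d \<Longrightarrow> prod_apply n d S v = v \<Longrightarrow> prod_apply n d S \<in> stabilizer n d v"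
  unfolding stabilizer_def by blast

lemma stabilizer_fixes: "T \<in> stabilizer n d v \<Longrightarrow> T v = v"
  unfolding stabilizer_def by blast

lemma stabilizer_idm: "\<forall>xs. xs \<notin> Bas n d \<longrightarrow> v xs = 0 \<Longrightarrow> prod_apply n d (\<lambda>i. idm) \<in> stabilizer n d v"
  by (intro stabilizerI) (simp_all add: idm_GL prod_apply_idm_supported)

lemma sum_cmod_sq_pos:
  fixes w :: "nat \<Rightarrow> complex"
  assumes "a0 < d" "w a0 \<noteq> 0"
  shows "(\<Sum>c<d. (cmod (w c))\<^sup>2) > 0"
proof -
  have "(cmod (w a0))\<^sup>2 \<le> (\<Sum>c<d. (cmod (w c))\<^sup>2)"
    using assms by (intro member_le_sum) auto
  moreover have "(cmod (w a0))\<^sup>2 > 0"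
    using assms by simp
  ultimately show ?thesis
    by linarith
qed

definition rank1_proj :: "nat \<Rightarrow> (nat \<Rightarrow> complex) \<Rightarrow> lmat" where
  "rank1_proj d w = (\<lambda>a b. cnj (w a) / of_real (\<Sum>c<d. (cmod (w c))\<^sup>2) * w b)"

lemma rank1_proj_idem:
  assumes "a0 < d" "w a0 \<noteq> 0"
  shows "mmul d (rank1_proj d w) (rank1_proj d w) a b = rank1_proj d w a b"
proof -
  define W where "W = (\<Sum>c<d. (cmod (w c))\<^sup>2)"
  have "(\<Sum>c<d. w c * cnj (w c)) = of_real W"
    unfolding W_def by (simp only: of_real_sum complex_norm_square)
  moreover have "W \<noteq> 0"
    using sum_cmod_sq_pos[of a0 d w, OF assms] by (simp add: W_def)
  moreover have "mmul d (rank1_proj d w) (rank1_proj d w) a b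
      = cnj (w a) / of_real W * (\<Sum>c<d. w c * cnj (w c)) / of_real W * w b"
    unfolding mmul_def rank1_proj_def W_def[symmetric]
    by (simp add: sum_distrib_left sum_distrib_right sum_divide_distrib mult_ac)
  ultimately show ?thesis
    by (simp add: rank1_proj_def W_def[symmetric])
qed

lemma rank1_proj_diag:
  assumes "a0 < d" "w a0 \<noteq> 0"
  shows "rank1_proj d w a0 a0 \<noteq> 0"
proof -
  define W where "W = (\<Sum>c<d. (cmod (w c))\<^sup>2)"
  have "W \<noteq> 0"
    using sum_cmod_sq_pos[of a0 d w, OF assms] by (simp add: W_def)
  then show ?thesis
    unfolding rank1_proj_def W_def[symmetric] using assms by simp
qed

lemma prod_apply_rank1_proj_annihilated:
  assumes i: "i < n"
    and annih: "\<forall>ys\<in>Bas n d. (\<Sum>a<d. w a * v (ys[i := a])) = 0"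
    and supp: "\<forall>xs. xs \<notin> Bas n d \<longrightarrow> v xs = 0"
  shows "prod_apply n d (on_party i (\<lambda>a b. idm a b + t * rank1_proj d w a b)) v = v"
proof
  fix ys
  show "prod_apply n d (on_party i (\<lambda>a b. idm a b + t * rank1_proj d w a b)) v ys = v ys"
  proof (cases "ys \<in> Bas n d")
    case True
    then have "ys ! i < d"
      using i by (simp add: Bas_iff)
    moreover have "(\<Sum>b<d. rank1_proj d w (ys ! i) b * v (ys[i := b]))
        = cnj (w (ys ! i)) / of_real (\<Sum>c<d. (cmod (w c))\<^sup>2) * (\<Sum>b<d. w b * v (ys[i := b]))"
      by (simp add: rank1_proj_def sum_distrib_left mult.assoc)
    ultimately show ?thesis
      using True i annih by (simp add: prod_apply_on_party algebra_simps sum.distrib sum_distrib_left[symmetric]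
          sum_idm_left)
  qed (simp add: prod_apply_outside supp)
qed

lemma rank1_perturbation_in_stabilizer:
  assumes i: "i < n" and a0: "a0 < d" "w a0 \<noteq> 0"
    and annih: "\<forall>ys\<in>Bas n d. (\<Sum>a<d. w a * v (ys[i := a])) = 0"
    and supp: "\<forall>xs. xs \<notin> Bas n d \<longrightarrow> v xs = 0"
  shows "prod_apply n d (on_party i (\<lambda>a b. idm a b + of_nat k * rank1_proj d w a b)) \<in> stabilizer n d v"
proof -
  have "Re (of_nat k) \<noteq> Re (-1 :: complex)"
    by simp
  then have "of_nat k \<noteq> (-1 :: complex)"
    by metis
  then have "(\<lambda>a b. idm a b + of_nat k * rank1_proj d w a b) \<in> GL d"
    using rank1_proj_idem[of a0 d w] a0 by (intro GL_idm_add_idempotent) auto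
  then show ?thesis
    using idm_GL prod_apply_rank1_proj_annihilated[OF i annih supp] by (intro stabilizerI) auto
qed

lemma full_local_rank_if_finite_stabilizer:
  assumes fin: "finite (stabilizer n d v)" and supp: "\<forall>xs. xs \<notin> Bas n d \<longrightarrow> v xs = 0"
  shows "full_local_rank n d v"
  unfolding full_local_rank_def
proof (intro allI impI, rule ccontr)
  fix i w a0
  assume i: "i < n" and annih: "\<forall>ys\<in>Bas n d. (\<Sum>a<d. w a * v (ys[i := a])) = 0"
    and a0: "a0 < d" "w a0 \<noteq> 0"
  define S where "S k = prod_apply n d (on_party i (\<lambda>a b. idm a b + of_nat k * rank1_proj d w a b))"
    for k :: nat
  have "inj S"
  proof (rule injI)
    fix k l assume "S k = S l"
    then have "S k (ket ((replicate n 0)[i := a0])) ((replicate n 0)[i := a0])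
        = S l (ket ((replicate n 0)[i := a0])) ((replicate n 0)[i := a0])"
      by simp
    then have "of_nat k * rank1_proj d w a0 a0 = of_nat l * rank1_proj d w a0 a0"
      unfolding S_def using i a0 by (simp add: prod_apply_on_party_ket)
    then show "k = l"
      using rank1_proj_diag[of a0 d w] a0 by simp
  qed
  moreover have "range S \<subseteq> stabilizer n d v"
    unfolding S_def using rank1_perturbation_in_stabilizer[OF i a0 annih supp] by blast
  ultimately have "finite (UNIV :: nat set)"
    using fin by (rule inj_on_finite)
  then show False
    by simp
qed

lemma prod_apply_slice:
  assumes i: "i < n" and ys: "ys \<in> Bas n d"
    and wN: "\<forall>b<d. (\<Sum>a<d. w a * N i a b) = 0"
  shows "(\<Sum>a<d. w a * prod_apply n d N v (ys[i := a])) = 0"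
proof -
  have factor: "(\<Prod>j<n. N j ((ys[i := a]) ! j) (xs ! j)) = N i a (xs ! i) * (\<Prod>j\<in>{..<n} - {i}. N j (ys ! j) (xs ! j))"
    for a xs
  proof -
    have "(\<Prod>j<n. N j ((ys[i := a]) ! j) (xs ! j))
        = N i a (xs ! i) * (\<Prod>j\<in>{..<n} - {i}. N j ((ys[i := a]) ! j) (xs ! j))"
      using i ys by (simp add: prod.remove[of _ i] Bas_iff)
    also have "(\<Prod>j\<in>{..<n} - {i}. N j ((ys[i := a]) ! j) (xs ! j)) = (\<Prod>j\<in>{..<n} - {i}. N j (ys ! j) (xs ! j))"
      by (rule prod.cong) auto
    finally show ?thesis .
  qed
  have "(\<Sum>a<d. w a * prod_apply n d N v (ys[i := a]))
      = (\<Sum>xs\<in>Bas n d. \<Sum>a<d. w a * ((\<Prod>j<n. N j ((ys[i := a]) ! j) (xs ! j)) * v xs))"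
    using ys by (simp add: prod_apply_def Bas_list_update sum_distrib_left) (rule sum.swap)
  also have "\<dots> = (\<Sum>xs\<in>Bas n d. (\<Sum>a<d. w a * N i a (xs ! i)) * ((\<Prod>j\<in>{..<n} - {i}. N j (ys ! j) (xs ! j)) * v xs))"
    by (simp add: factor sum_distrib_right mult.assoc)
  also have "\<dots> = 0"
    using wN i by (intro sum.neutral) (simp add: Bas_iff)
  finally show ?thesis .
qed

lemma GL_if_eigenvector:
  assumes rank: "full_local_rank n d v" and i: "i < n"
    and eigen: "prod_apply n d N v = (\<lambda>ys. c * v ys)" and c: "c \<noteq> 0"
  shows "N i \<in> GL d"
proof (rule rows_indep_imp_GL, unfold rows_indep_def, intro allI impI)
  fix w a assume wN: "\<forall>b<d. (\<Sum>a<d. w a * N i a b) = 0" and a: "a < d"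
  have "\<forall>ys\<in>Bas n d. (\<Sum>a<d. w a * v (ys[i := a])) = 0"
  proof
    fix ys assume ys: "ys \<in> Bas n d"
    have "c * (\<Sum>a<d. w a * v (ys[i := a])) = (\<Sum>a<d. w a * prod_apply n d N v (ys[i := a]))"
      by (simp add: eigen sum_distrib_left mult_ac)
    then show "(\<Sum>a<d. w a * v (ys[i := a])) = 0"
      using prod_apply_slice[where w = w and N = N, OF i ys wN] c by simp
  qed
  then show "w a = 0"
    using full_local_rankD[OF rank i _ a] by simp
qed

section \<open>Successful branches of a separable operation\<close>

lemma scaled_eigen_in_stabilizer:
  assumes n: "0 < n" and GL: "\<forall>i<n. N i \<in> GL d"
    and eigen: "prod_apply n d N v = (\<lambda>ys. c * v ys)" and c: "c \<noteq> 0"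
  shows "\<exists>T\<in>stabilizer n d v. \<forall>u. prod_apply n d N u = (\<lambda>ys. c * T u ys)"
proof -
  define S where "S = N(0 := (\<lambda>a b. (1 / c) * N 0 a b))"
  have S: "prod_apply n d S u = (\<lambda>ys. (1 / c) * prod_apply n d N u ys)" for u
    unfolding S_def using n by (rule prod_apply_scale_party)
  have "(\<lambda>a b. (1 / c) * N 0 a b) \<in> GL d"
    using GL c n by (intro GL_smult) auto
  then have "\<forall>i<n. S i \<in> GL d"
    using GL by (simp add: S_def)
  moreover have "prod_apply n d S v = v"
    using c by (simp add: S eigen)
  ultimately have "prod_apply n d S \<in> stabilizer n d v"
    by (rule stabilizerI)
  moreover have "prod_apply n d N u = (\<lambda>ys. c * prod_apply n d S u ys)" for u
    using c by (simp add: S)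
  ultimately show ?thesis
    by blast
qed

text \<open>Since \<open>v\<close> has full local rank, every local factor of \<open>G\<^sup>-\<^sup>1 M\<close> is invertible, so \<open>G\<^sup>-\<^sup>1 M\<close>
  is a multiple of a stabilizer element.\<close>

lemma branch_factorization:
  assumes n: "0 < n" and rank: "full_local_rank n d v" and supp: "\<forall>xs. xs \<notin> Bas n d \<longrightarrow> v xs = 0"
    and G: "\<forall>i<n. G i \<in> GL d" and c: "c \<noteq> 0"
    and M: "prod_apply n d M v = (\<lambda>ys. c * prod_apply n d G v ys)"
  shows "\<exists>T\<in>stabilizer n d v. \<forall>u. prod_apply n d M u = (\<lambda>ys. c * prod_apply n d G (T u) ys)"
proof -
  obtain H where H: "\<forall>i<n. \<forall>a<d. \<forall>b<d. mmul d (G i) (H i) a b = idm a b \<and> mmul d (H i) (G i) a b = idm a b"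
    using GL_inverses[OF G] by blast
  have GH: "prod_apply n d G (prod_apply n d H w) = (\<lambda>ys. if ys \<in> Bas n d then w ys else 0)"
    and HG: "prod_apply n d H (prod_apply n d G w) = (\<lambda>ys. if ys \<in> Bas n d then w ys else 0)" for w
    using H by (simp_all add: prod_apply_inverse)
  define N where "N i = mmul d (H i) (M i)" for i
  have N: "prod_apply n d N u = prod_apply n d H (prod_apply n d M u)" for u
    unfolding N_def by (simp add: prod_apply_mmul)
  have "prod_apply n d N v = (\<lambda>ys. c * v ys)"
    using supp by (auto simp: N M prod_apply_smult HG)
  then obtain T where T: "T \<in> stabilizer n d v" "\<forall>u. prod_apply n d N u = (\<lambda>ys. c * T u ys)"
    using scaled_eigen_in_stabilizer[OF n _ _ c] GL_if_eigenvector[OF rank _ _ c] by blast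
  have "prod_apply n d M u = (\<lambda>ys. c * prod_apply n d G (T u) ys)" for u
  proof -
    have "prod_apply n d M u = prod_apply n d G (prod_apply n d N u)"
      by (auto simp: N GH prod_apply_outside)
    then show ?thesis
      by (simp add: T(2) prod_apply_smult)
  qed
  with T(1) show ?thesis
    by blast
qed

lemma proportional_prod_apply_cases:
  assumes "proportional n d (prod_apply n d M a) (\<lambda>ys. prod_apply n d G a ys / of_real N)"
  shows "prod_apply n d M a = (\<lambda>ys. 0) \<or> (\<exists>c. c \<noteq> 0 \<and> prod_apply n d M a = (\<lambda>ys. c * prod_apply n d G a ys))"
proof -
  obtain k where k: "\<forall>ys\<in>Bas n d. prod_apply n d M a ys = k * (prod_apply n d G a ys / of_real N)"
    using assms unfolding proportional_def by blast
  have eq: "prod_apply n d M a = (\<lambda>ys. k / of_real N * prod_apply n d G a ys)"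
  proof
    fix ys
    show "prod_apply n d M a ys = k / of_real N * prod_apply n d G a ys"
      using k by (cases "ys \<in> Bas n d") (simp_all add: prod_apply_outside)
  qed
  show ?thesis
  proof (cases "k / of_real N = 0")
    case True
    then show ?thesis
      using eq by auto
  next
    case False
    then show ?thesis
      using eq by blast
  qed
qed

lemma successful_branch:
  assumes "0 < n" "full_local_rank n d a" "\<forall>xs. xs \<notin> Bas n d \<longrightarrow> a xs = 0" "\<forall>i<n. G i \<in> GL d"
    and "proportional n d (prod_apply n d M a) (\<lambda>ys. prod_apply n d G a ys / of_real N)"
  shows "prod_apply n d M a = (\<lambda>ys. 0) \<or>
    (\<exists>c T. T \<in> stabilizer n d a \<and> (\<forall>u. prod_apply n d M u = (\<lambda>ys. c * prod_apply n d G (T u) ys)))"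
  using proportional_prod_apply_cases[OF assms(5)] branch_factorization[OF assms(1-4)] by blast

lemma succ_prob_le_test_vectors:
  assumes sep: "sep_op n d Ms" and C: "C \<ge> 0"
    and branch: "\<And>M. proportional n d (prod_apply n d M a) b \<Longrightarrow>
      (vnorm n d (prod_apply n d M a))\<^sup>2 \<le> C * (\<Sum>t\<leftarrow>ts. (vnorm n d (prod_apply n d M t))\<^sup>2)"
  shows "succ_prob n d Ms a b \<le> C * (\<Sum>t\<leftarrow>ts. (vnorm n d t)\<^sup>2)"
proof -
  have "succ_prob n d Ms a b
      = (\<Sum>M\<leftarrow>Ms. if proportional n d (prod_apply n d M a) b then (vnorm n d (prod_apply n d M a))\<^sup>2 else 0)"
    unfolding succ_prob_def by (rule sum_list_map_filter')
  also have "\<dots> \<le> (\<Sum>M\<leftarrow>Ms. C * (\<Sum>t\<leftarrow>ts. (vnorm n d (prod_apply n d M t))\<^sup>2))"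
    using branch C by (intro sum_list_mono) (auto intro!: mult_nonneg_nonneg sum_list_nonneg)
  also have "\<dots> = C * (\<Sum>t\<leftarrow>ts. \<Sum>M\<leftarrow>Ms. (vnorm n d (prod_apply n d M t))\<^sup>2)"
    by (induction Ms) (simp_all add: sum_list_const_mult sum_list_addf algebra_simps)
  also have "\<dots> \<le> C * (\<Sum>t\<leftarrow>ts. (vnorm n d t)\<^sup>2)"
    using sep C unfolding sep_op_def by (intro mult_left_mono sum_list_mono) auto
  finally show ?thesis .
qed

section \<open>Two copies\<close>

lemma sum_lessThan_2: "(\<Sum>c<2::nat. f c) = f 0 + f 1"
  by (simp add: eval_nat_numeral)

lemma sum_lessThan_4: "(\<Sum>c<4::nat. f c) = f 0 + f 1 + f 2 + f 3"
  by (simp add: eval_nat_numeral add.assoc)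

text \<open>The index convention is that of \<^const>\<open>swap4\<close> and \<^const>\<open>two_copy\<close>: \<open>a div 2\<close> belongs to the
  first copy, \<open>a mod 2\<close> to the second.\<close>

definition kron :: "lmat \<Rightarrow> lmat \<Rightarrow> lmat" where
  "kron A B = (\<lambda>a b. A (a div 2) (b div 2) * B (a mod 2) (b mod 2))"

lemma mmul_kron: "mmul 4 (kron A B) (kron C D) a b = kron (mmul 2 A C) (mmul 2 B D) a b"
  unfolding mmul_def kron_def by (simp add: sum_lessThan_4 sum_lessThan_2 algebra_simps)

lemma adj_kron: "adj 4 (kron A B) = kron (adj 2 A) (adj 2 B)"
  unfolding adj_def kron_def by (simp add: fun_eq_iff)

lemma kron_idm: "kron idm idm a b = idm a b"
  unfolding kron_def idm_def by auto (metis div_mod_decomp)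

lemma kron_GL:
  assumes "A \<in> GL 2" "B \<in> GL 2"
  shows "kron A B \<in> GL 4"
proof -
  obtain A' where A': "\<forall>a<2. \<forall>b<2. mmul 2 A A' a b = idm a b \<and> mmul 2 A' A a b = idm a b"
    using assms(1) by (auto simp: GL_def)
  obtain B' where B': "\<forall>a<2. \<forall>b<2. mmul 2 B B' a b = idm a b \<and> mmul 2 B' B a b = idm a b"
    using assms(2) by (auto simp: GL_def)
  have "mmul 4 (kron A B) (kron A' B') a b = idm a b \<and> mmul 4 (kron A' B') (kron A B) a b = idm a b"
    if "a < 4" "b < 4" for a b
  proof -
    have "a div 2 < 2" "b div 2 < 2" "a mod 2 < 2" "b mod 2 < 2"
      using that by auto
    then show ?thesis
      using A' B' kron_idm by (simp add: mmul_kron) (simp add: kron_def)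
  qed
  then show ?thesis
    unfolding GL_def by blast
qed

lemma two_copy_outside: "xs \<notin> Bas n 4 \<Longrightarrow> two_copy n phi chi xs = 0"
  by (simp add: two_copy_def)

lemma vnorm_two_copy: "vnorm n 4 (two_copy n phi chi) = vnorm n 2 phi * vnorm n 2 chi"
proof -
  have "(\<Sum>ys\<in>Bas n 4. (cmod (two_copy n phi chi ys))\<^sup>2)
      = (\<Sum>ys\<in>Bas n 4. (\<lambda>p q. (cmod (phi p))\<^sup>2 * (cmod (chi q))\<^sup>2) (map (\<lambda>a. a div 2) ys) (map (\<lambda>a. a mod 2) ys))"
    by (rule sum.cong) (auto simp: two_copy_def norm_mult power_mult_distrib)
  also have "\<dots> = (\<Sum>p\<in>Bas n 2. \<Sum>q\<in>Bas n 2. (cmod (phi p))\<^sup>2 * (cmod (chi q))\<^sup>2)"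
    by (rule sum_Bas_4)
  also have "\<dots> = (\<Sum>p\<in>Bas n 2. (cmod (phi p))\<^sup>2) * (\<Sum>q\<in>Bas n 2. (cmod (chi q))\<^sup>2)"
    by (simp add: sum_product)
  finally show ?thesis
    unfolding vnorm_def by (simp add: real_sqrt_mult)
qed

lemma two_copy_kron:
  "prod_apply n 4 (\<lambda>i. kron (A i) (B i)) (two_copy n phi chi)
     = two_copy n (prod_apply n 2 A phi) (prod_apply n 2 B chi)"
proof
  fix ys
  show "prod_apply n 4 (\<lambda>i. kron (A i) (B i)) (two_copy n phi chi) ys
      = two_copy n (prod_apply n 2 A phi) (prod_apply n 2 B chi) ys"
  proof (cases "ys \<in> Bas n 4")
    case True
    define y1 where "y1 = map (\<lambda>a. a div 2) ys"
    define y2 where "y2 = map (\<lambda>a. a mod 2) ys"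
    have y: "y1 \<in> Bas n 2" "y2 \<in> Bas n 2"
      using True by (auto simp: y1_def y2_def Bas_def)
    define F where "F p q = (\<Prod>i<n. A i (y1 ! i) (p ! i)) * phi p * ((\<Prod>i<n. B i (y2 ! i) (q ! i)) * chi q)"
      for p q
    have "(\<Prod>i<n. kron (A i) (B i) (ys ! i) (xs ! i)) * two_copy n phi chi xs
        = F (map (\<lambda>a. a div 2) xs) (map (\<lambda>a. a mod 2) xs)" if "xs \<in> Bas n 4" for xs
    proof -
      have "(\<Prod>i<n. kron (A i) (B i) (ys ! i) (xs ! i))
          = (\<Prod>i<n. A i (y1 ! i) (map (\<lambda>a. a div 2) xs ! i)) * (\<Prod>i<n. B i (y2 ! i) (map (\<lambda>a. a mod 2) xs ! i))"
        unfolding prod.distrib[symmetric] using that True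
        by (intro prod.cong) (auto simp: kron_def y1_def y2_def Bas_def)
      then show ?thesis
        using that by (simp add: two_copy_def F_def mult_ac)
    qed
    then have "prod_apply n 4 (\<lambda>i. kron (A i) (B i)) (two_copy n phi chi) ys
        = (\<Sum>xs\<in>Bas n 4. F (map (\<lambda>a. a div 2) xs) (map (\<lambda>a. a mod 2) xs))"
      using True by (simp add: prod_apply_def)
    also have "\<dots> = (\<Sum>p\<in>Bas n 2. \<Sum>q\<in>Bas n 2. F p q)"
      by (rule sum_Bas_4)
    also have "\<dots> = two_copy n (prod_apply n 2 A phi) (prod_apply n 2 B chi) ys"
      using True y by (simp add: F_def prod_apply_def sum_product two_copy_def y1_def y2_def)
    finally show ?thesis .
  qed (simp add: prod_apply_def two_copy_def)
qed

lemma prod_apply_kron_idm_neq_swap4: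
  assumes "0 < n"
  shows "prod_apply n 4 (\<lambda>i. kron (S i) idm) \<noteq> prod_apply n 4 (\<lambda>i. swap4)"
proof
  assume eq: "prod_apply n 4 (\<lambda>i. kron (S i) idm) = prod_apply n 4 (\<lambda>i. swap4)"
  let ?x = "(replicate n (0::nat))[0 := 1]" and ?y = "(replicate n (0::nat))[0 := 2]"
  have Bas: "?x \<in> Bas n 4" "?y \<in> Bas n 4"
    by (simp_all add: Bas_list_update replicate_0_Bas)
  have "map (\<lambda>a. 2 * (a mod 2) + a div 2) ?x = ?y"
    by (simp add: map_update map_replicate_const)
  then have "prod_apply n 4 (\<lambda>i. swap4) (ket ?x) ?y = 1"
    using Bas by (simp add: prod_apply_swap4_ket) (simp add: ket_def)
  moreover have "prod_apply n 4 (\<lambda>i. kron (S i) idm) (ket ?x) ?y = 0"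
    using Bas assms by (simp add: prod_apply_ket kron_def idm_def) (intro prod_zero bexI[of _ 0], simp_all)
  ultimately show False
    using eq by simp
qed

lemma prod_apply_trivial_if_kron_idm:
  assumes "prod_apply n 4 (\<lambda>i. kron (S i) idm) = prod_apply n 4 (\<lambda>i. idm)"
  shows "prod_apply n 2 S = prod_apply n 2 (\<lambda>i. idm)"
proof (intro ext)
  fix v ys
  show "prod_apply n 2 S v ys = prod_apply n 2 (\<lambda>i. idm) v ys"
  proof (cases "ys \<in> Bas n 2")
    case True
    let ?z = "replicate n 0" and ?zs = "map (\<lambda>a. 2 * a) ys"
    have z: "?z \<in> Bas n 2" "?zs \<in> Bas n 4" "map (\<lambda>a. a mod 2) ?zs = ?z"
      using True by (auto simp: Bas_def comp_def map_replicate_const)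
    have "two_copy n (prod_apply n 2 S v) (prod_apply n 2 (\<lambda>i. idm) (ket ?z))
        = prod_apply n 4 (\<lambda>i. kron (S i) idm) (two_copy n v (ket ?z))"
      by (rule two_copy_kron[where A = S and B = "\<lambda>i. idm", symmetric])
    also have "\<dots> = two_copy n v (ket ?z)"
      unfolding assms by (rule prod_apply_idm_supported) (simp add: two_copy_outside)
    finally have "two_copy n (prod_apply n 2 S v) (prod_apply n 2 (\<lambda>i. idm) (ket ?z)) ?zs = two_copy n v (ket ?z) ?zs"
      by simp
    then show ?thesis
      using True z by (simp add: two_copy_def comp_def prod_apply_idm ket_def)
  qed (simp add: prod_apply_outside)
qed

lemma stabilizer_trivial_if_two_copy:
  assumes stab: "stabilizer n 4 (two_copy n psi psi) = {prod_apply n 4 (\<lambda>i. idm), prod_apply n 4 (\<lambda>i. swap4)}"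
    and supp: "\<forall>xs. xs \<notin> Bas n 2 \<longrightarrow> psi xs = 0" and n: "0 < n"
  shows "stabilizer n 2 psi = {prod_apply n 2 (\<lambda>i. idm)}"
proof
  show "{prod_apply n 2 (\<lambda>i. idm)} \<subseteq> stabilizer n 2 psi"
    using stabilizer_idm[OF supp] by simp
  show "stabilizer n 2 psi \<subseteq> {prod_apply n 2 (\<lambda>i. idm)}"
  proof
    fix T assume "T \<in> stabilizer n 2 psi"
    then obtain S where S: "T = prod_apply n 2 S" "\<forall>i<n. S i \<in> GL 2" "prod_apply n 2 S psi = psi"
      by (auto simp: stabilizer_def)
    have "prod_apply n 4 (\<lambda>i. kron (S i) idm) (two_copy n psi psi) = two_copy n psi psi"
      using S(3) supp two_copy_kron[where A = S and B = "\<lambda>i. idm" and phi = psi and chi = psi]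
      by (simp add: prod_apply_idm_supported)
    then have "prod_apply n 4 (\<lambda>i. kron (S i) idm) \<in> stabilizer n 4 (two_copy n psi psi)"
      using S(2) by (intro stabilizerI) (auto intro: kron_GL idm_GL)
    then have "prod_apply n 4 (\<lambda>i. kron (S i) idm) = prod_apply n 4 (\<lambda>i. idm)"
      using stab prod_apply_kron_idm_neq_swap4[OF n] by auto
    then show "T \<in> {prod_apply n 2 (\<lambda>i. idm)}"
      using S(1) prod_apply_trivial_if_kron_idm by blast
  qed
qed

section \<open>Upper bounds on the success probability\<close>

text \<open>Every successful branch is \<open>c G T\<close> with \<open>T\<close> in the stabilizer, so it is \<open>N\<^sup>2 / C\<close> times as
  effective on \<open>\<Phi>\<close> as on the test vectors \<open>ts\<close>.\<close>

lemma succ_prob_le_stabilizer_test_vectors: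
  assumes n: "0 < n" and rank: "full_local_rank n d Phi" and supp: "\<forall>xs. xs \<notin> Bas n d \<longrightarrow> Phi xs = 0"
    and G: "\<forall>i<n. G i \<in> GL d" and N: "N = vnorm n d (prod_apply n d G Phi)"
    and C: "C > 0" and test: "\<And>T. T \<in> stabilizer n d Phi \<Longrightarrow> (\<Sum>t\<leftarrow>ts. (vnorm n d (prod_apply n d G (T t)))\<^sup>2) = C"
    and sep: "sep_op n d Ms"
  shows "succ_prob n d Ms Phi (\<lambda>ys. prod_apply n d G Phi ys / of_real N) \<le> N\<^sup>2 / C * (\<Sum>t\<leftarrow>ts. (vnorm n d t)\<^sup>2)"
proof (rule succ_prob_le_test_vectors[OF sep])
  fix M assume "proportional n d (prod_apply n d M Phi) (\<lambda>ys. prod_apply n d G Phi ys / of_real N)"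
  from successful_branch[OF n rank supp G this]
  show "(vnorm n d (prod_apply n d M Phi))\<^sup>2 \<le> N\<^sup>2 / C * (\<Sum>t\<leftarrow>ts. (vnorm n d (prod_apply n d M t))\<^sup>2)"
  proof
    assume "prod_apply n d M Phi = (\<lambda>ys. 0)"
    moreover have "0 \<le> N\<^sup>2 / C * (\<Sum>t\<leftarrow>ts. (vnorm n d (prod_apply n d M t))\<^sup>2)"
      using C by (intro mult_nonneg_nonneg sum_list_nonneg) auto
    ultimately show ?thesis
      by (simp add: vnorm_zero)
  next
    assume "\<exists>c T. T \<in> stabilizer n d Phi \<and> (\<forall>u. prod_apply n d M u = (\<lambda>ys. c * prod_apply n d G (T u) ys))"
    then obtain c T where T: "T \<in> stabilizer n d Phi"
      and M: "\<forall>u. prod_apply n d M u = (\<lambda>ys. c * prod_apply n d G (T u) ys)"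
      by blast
    have "(vnorm n d (prod_apply n d M Phi))\<^sup>2 = (cmod c)\<^sup>2 * N\<^sup>2"
      using M stabilizer_fixes[OF T] N by (simp add: vnorm_smult power_mult_distrib)
    moreover have "(\<Sum>t\<leftarrow>ts. (vnorm n d (prod_apply n d M t))\<^sup>2)
        = (cmod c)\<^sup>2 * (\<Sum>t\<leftarrow>ts. (vnorm n d (prod_apply n d G (T t)))\<^sup>2)"
      using M by (simp add: vnorm_smult power_mult_distrib sum_list_const_mult)
    ultimately show ?thesis
      using test[OF T] C by simp
  qed
qed (use C in simp)

lemma succ_prob_le_trivial_stabilizer:
  assumes n: "0 < n" and supp: "\<forall>xs. xs \<notin> Bas n d \<longrightarrow> psi xs = 0"
    and stab: "stabilizer n d psi = {prod_apply n d (\<lambda>i. idm)}"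
    and p: "p < n" and h: "h \<in> GL d" and e: "e < d" and col: "(\<Sum>a<d. (cmod (h a e))\<^sup>2) = 1"
    and N: "N = vnorm n d (prod_apply n d (on_party p h) psi)"
    and sep: "sep_op n d Ms"
  shows "succ_prob n d Ms psi (\<lambda>ys. prod_apply n d (on_party p h) psi ys / of_real N) \<le> N\<^sup>2"
proof -
  let ?t = "ket ((replicate n 0)[p := e])"
  have rank: "full_local_rank n d psi"
    by (rule full_local_rank_if_finite_stabilizer) (simp_all add: stab supp)
  have "(\<Sum>t\<leftarrow>[?t]. (vnorm n d (prod_apply n d (on_party p h) (T t)))\<^sup>2) = 1"
    if "T \<in> stabilizer n d psi" for T
    using that stab vnorm_on_party_ket[OF p e] col by (simp add: prod_apply_restrict)
  then have "succ_prob n d Ms psi (\<lambda>ys. prod_apply n d (on_party p h) psi ys / of_real N)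
      \<le> N\<^sup>2 / 1 * (\<Sum>t\<leftarrow>[?t]. (vnorm n d t)\<^sup>2)"
    using h idm_GL by (intro succ_prob_le_stabilizer_test_vectors[OF n rank supp _ N _ _ sep]) auto
  also have "\<dots> = N\<^sup>2"
    using p e by (simp add: vnorm_ket Bas_list_update replicate_0_Bas)
  finally show ?thesis .
qed

text \<open>The global swap exchanges the two test vectors \<open>|0\<dots>0 1\<rangle>\<close> and \<open>|0\<dots>0 2\<rangle>\<close> (local value at
  party \<open>p\<close>), so both stabilizer elements preserve the sum of their squared norms under \<open>K\<close>.\<close>

lemma succ_prob_le_swap_stabilizer:
  assumes n: "0 < n" and supp: "\<forall>xs. xs \<notin> Bas n 4 \<longrightarrow> Phi xs = 0"
    and stab: "stabilizer n 4 Phi = {prod_apply n 4 (\<lambda>i. idm), prod_apply n 4 (\<lambda>i. swap4)}"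
    and p: "p < n" and K: "K \<in> GL 4"
    and col1: "(\<Sum>a<4. (cmod (K a 1))\<^sup>2) = \<alpha>" and col2: "(\<Sum>a<4. (cmod (K a 2))\<^sup>2) = \<beta>"
    and pos: "\<alpha> + \<beta> > 0"
    and N: "N = vnorm n 4 (prod_apply n 4 (on_party p K) Phi)"
    and sep: "sep_op n 4 Ms"
  shows "succ_prob n 4 Ms Phi (\<lambda>ys. prod_apply n 4 (on_party p K) Phi ys / of_real N) \<le> 2 / (\<alpha> + \<beta>) * N\<^sup>2"
proof -
  let ?x1 = "(replicate n (0::nat))[p := 1]" and ?x2 = "(replicate n (0::nat))[p := 2]"
  let ?G = "prod_apply n 4 (on_party p K)"
  have Bas: "?x1 \<in> Bas n 4" "?x2 \<in> Bas n 4"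
    by (simp_all add: Bas_list_update replicate_0_Bas)
  have rank: "full_local_rank n 4 Phi"
    by (rule full_local_rank_if_finite_stabilizer) (simp_all add: stab supp)
  have "map (\<lambda>a. 2 * (a mod 2) + a div 2) ?x1 = ?x2" "map (\<lambda>a. 2 * (a mod 2) + a div 2) ?x2 = ?x1"
    by (simp_all add: map_update map_replicate_const)
  then have swap: "prod_apply n 4 (\<lambda>i. swap4) (ket ?x1) = ket ?x2" "prod_apply n 4 (\<lambda>i. swap4) (ket ?x2) = ket ?x1"
    using Bas by (simp_all add: prod_apply_swap4_ket)
  have norms: "(vnorm n 4 (?G (ket ?x1)))\<^sup>2 = \<alpha>" "(vnorm n 4 (?G (ket ?x2)))\<^sup>2 = \<beta>"
    using vnorm_on_party_ket[OF p, of _ 4 K] col1 col2 by simp_all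
  have "(\<Sum>t\<leftarrow>[ket ?x1, ket ?x2]. (vnorm n 4 (?G (T t)))\<^sup>2) = \<alpha> + \<beta>"
    if "T \<in> stabilizer n 4 Phi" for T
  proof -
    from that stab have "T = prod_apply n 4 (\<lambda>i. idm) \<or> T = prod_apply n 4 (\<lambda>i. swap4)"
      by auto
    then show ?thesis
    proof
      assume "T = prod_apply n 4 (\<lambda>i. idm)"
      then show ?thesis
        by (simp only: prod_apply_restrict norms sum_list_simps list.map add_0_right)
    next
      assume "T = prod_apply n 4 (\<lambda>i. swap4)"
      then show ?thesis
        by (simp only: swap norms sum_list_simps list.map add_0_right add.commute)
    qed
  qed
  then have "succ_prob n 4 Ms Phi (\<lambda>ys. ?G Phi ys / of_real N)
      \<le> N\<^sup>2 / (\<alpha> + \<beta>) * (\<Sum>t\<leftarrow>[ket ?x1, ket ?x2]. (vnorm n 4 t)\<^sup>2)"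
    using K idm_GL pos by (intro succ_prob_le_stabilizer_test_vectors[OF n rank supp _ N _ _ sep]) auto
  also have "\<dots> = 2 / (\<alpha> + \<beta>) * N\<^sup>2"
    using Bas by (simp add: vnorm_ket)
  finally show ?thesis .
qed

section \<open>LOCC protocols\<close>

lemma sum_list_sum_swap: "(\<Sum>A\<leftarrow>As. \<Sum>z\<in>Z. f A z) = (\<Sum>z\<in>Z. \<Sum>A\<leftarrow>As. f A z :: 'a::comm_monoid_add)"
  by (induction As) (simp_all add: sum.distrib)

lemma local_instr_vnorm_le:
  assumes p: "p < n" and d: "0 < d" and instr: "local_instr d As"
  shows "(\<Sum>A\<leftarrow>As. (vnorm n d (prod_apply n d (on_party p A) v))\<^sup>2) \<le> (vnorm n d v)\<^sup>2"
proof -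
  define Z where "Z = {zs\<in>Bas n d. zs ! p = 0}"
  have Z: "zs[p := a] \<in> Bas n d" "length zs = n" if "zs \<in> Z" "a < d" for zs a
    using that by (simp_all add: Z_def Bas_list_update) (simp add: Bas_iff)
  have split: "(vnorm n d (prod_apply n d (on_party p A) v))\<^sup>2
      = (\<Sum>zs\<in>Z. \<Sum>a<d. (cmod (\<Sum>b<d. A a b * v (zs[p := b])))\<^sup>2)" for A
  proof -
    have "(vnorm n d (prod_apply n d (on_party p A) v))\<^sup>2
        = (\<Sum>zs\<in>Z. \<Sum>a<d. (cmod (prod_apply n d (on_party p A) v (zs[p := a])))\<^sup>2)"
      unfolding vnorm_sq Z_def by (rule sum_Bas_split_party[OF p d])
    also have "\<dots> = (\<Sum>zs\<in>Z. \<Sum>a<d. (cmod (\<Sum>b<d. A a b * v (zs[p := b])))\<^sup>2)"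
      using Z p by (intro sum.cong refl) (simp add: prod_apply_on_party)
    finally show ?thesis .
  qed
  have "(\<Sum>A\<leftarrow>As. (vnorm n d (prod_apply n d (on_party p A) v))\<^sup>2)
      = (\<Sum>zs\<in>Z. \<Sum>A\<leftarrow>As. \<Sum>a<d. (cmod (\<Sum>b<d. A a b * v (zs[p := b])))\<^sup>2)"
    by (simp add: split sum_list_sum_swap)
  also have "\<dots> \<le> (\<Sum>zs\<in>Z. \<Sum>a<d. (cmod (v (zs[p := a])))\<^sup>2)"
    using instr unfolding local_instr_def by (intro sum_mono) simp
  also have "\<dots> = (vnorm n d v)\<^sup>2"
    unfolding vnorm_sq Z_def by (rule sum_Bas_split_party[OF p d, symmetric])
  finally show ?thesis .
qed

lemma sum_list_concat_map: "sum_list (map f (concat xss)) = sum_list (map (\<lambda>xs. sum_list (map f xs)) xss)"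
  by (induction xss) auto

lemma LOCC_imp_sep_op:
  assumes "LOCC n d Ms" and d: "0 < d"
  shows "sep_op n d Ms"
  using assms(1) unfolding sep_op_def
proof (induction rule: LOCC.induct)
  case LOCC_id
  have "vnorm n d (prod_apply n d (\<lambda>i. idm) v) = vnorm n d v" for v
    by (rule vnorm_cong) (simp add: prod_apply_idm)
  then show ?case
    by simp
next
  case (LOCC_local p As)
  then show ?case
    using local_instr_vnorm_le[OF _ d] by (simp add: comp_def)
next
  case (LOCC_comp Ks Ls)
  show ?case
  proof
    fix v
    have "(\<Sum>M\<leftarrow>concat (map (\<lambda>k. map (\<lambda>L i. mmul d (L i) ((Ks ! k) i)) (Ls k)) [0..<length Ks]).
        (vnorm n d (prod_apply n d M v))\<^sup>2)
        = (\<Sum>k\<leftarrow>[0..<length Ks]. \<Sum>L\<leftarrow>Ls k. (vnorm n d (prod_apply n d L (prod_apply n d (Ks ! k) v)))\<^sup>2)"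
      by (simp add: sum_list_concat_map comp_def prod_apply_mmul)
    also have "\<dots> \<le> (\<Sum>k\<leftarrow>[0..<length Ks]. (vnorm n d (prod_apply n d (Ks ! k) v))\<^sup>2)"
      using LOCC_comp.IH(2) by (intro sum_list_mono) auto
    also have "\<dots> = (\<Sum>K\<leftarrow>Ks. (vnorm n d (prod_apply n d K v))\<^sup>2)"
      by (subst (2) map_nth[symmetric]) (simp only: map_map comp_def)
    also have "\<dots> \<le> (vnorm n d v)\<^sup>2"
      using LOCC_comp.IH(1) by blast
    finally show "(\<Sum>M\<leftarrow>concat (map (\<lambda>k. map (\<lambda>L i. mmul d (L i) ((Ks ! k) i)) (Ls k)) [0..<length Ks]).
        (vnorm n d (prod_apply n d M v))\<^sup>2) \<le> (vnorm n d v)\<^sup>2" .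
  qed
qed

lemma LOCC_on_party: "p < n \<Longrightarrow> local_instr d [A] \<Longrightarrow> LOCC n d [on_party p A]"
  using LOCC.LOCC_local[of p n d "[A]"] by simp

lemma LOCC_swap4_except:
  assumes "p < n"
  shows "\<exists>P. LOCC n 4 [P] \<and> (\<forall>i<n. \<forall>a<4. \<forall>b<4. P i a b = (if i = p then idm else swap4) a b)"
proof -
  have "\<exists>P. LOCC n 4 [P] \<and> (\<forall>i<n. \<forall>a<4. \<forall>b<4. P i a b = (if i < m \<and> i \<noteq> p then swap4 else idm) a b)"
    if "m \<le> n" for m
    using that
  proof (induction m)
    case 0
    then show ?case
      using LOCC.LOCC_id[of n 4] by auto
  next
    case (Suc m)
    then obtain P where P: "LOCC n 4 [P]" "\<forall>i<n. \<forall>a<4. \<forall>b<4. P i a b = (if i < m \<and> i \<noteq> p then swap4 else idm) a b"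
      by auto
    define L where "L = (if m = p then idm else swap4)"
    have "local_instr 4 [L]"
      unfolding local_instr_def L_def by (simp add: sum_lessThan_4 swap4_def idm_def)
    then have "LOCC n 4 [on_party m L]"
      using Suc.prems by (intro LOCC_on_party) auto
    then have "LOCC n 4 [\<lambda>i. mmul 4 (on_party m L i) (P i)]"
      using LOCC.LOCC_comp[OF P(1), of "\<lambda>k. [on_party m L]"] by simp
    moreover have "mmul 4 (on_party m L i) (P i) a b = (if i < Suc m \<and> i \<noteq> p then swap4 else idm) a b"
      if "i < n" "a < 4" "b < 4" for i a b
    proof -
      have "mmul 4 (on_party m L i) (P i) a b = mmul 4 (on_party m L i) (if i < m \<and> i \<noteq> p then swap4 else idm) a b"
        using P(2) that by (intro mmul_cong) auto
      then show ?thesis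
        using that by (auto simp: L_def mmul_idm_left mmul_idm_right)
    qed
    ultimately show ?case
      by blast
  qed
  from this[of n] show ?thesis
    using assms by auto
qed

text \<open>Party \<open>p\<close> measures \<open>{A, A \<cdot> SWAP}\<close>; on the second outcome the other parties apply their local
  SWAP, which makes the overall branch \<open>A \<cdot> SWAP\<^sup>\<otimes>\<^sup>n\<close>.\<close>

lemma LOCC_measure_and_correct:
  assumes p: "p < n" and instr: "local_instr 4 [A, mmul 4 A swap4]"
  shows "\<exists>M1 M2. LOCC n 4 [M1, M2] \<and> prod_apply n 4 M1 = prod_apply n 4 (on_party p A)
    \<and> (\<forall>v. prod_apply n 4 M2 v = prod_apply n 4 (on_party p A) (prod_apply n 4 (\<lambda>i. swap4) v))"
proof -
  define Ks where "Ks = map (on_party p) [A, mmul 4 A swap4]"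
  obtain P where P: "LOCC n 4 [P]" "\<forall>i<n. \<forall>a<4. \<forall>b<4. P i a b = (if i = p then idm else swap4) a b"
    using LOCC_swap4_except[OF p] by blast
  define Ls where "Ls k = (if k = 0 then [\<lambda>i::nat. idm] else [P])" for k :: nat
  have "LOCC n 4 (concat (map (\<lambda>k. map (\<lambda>L i. mmul 4 (L i) ((Ks ! k) i)) (Ls k)) [0..<length Ks]))"
    using LOCC.LOCC_local[OF p instr] P(1) LOCC.LOCC_id[of n 4]
    by (intro LOCC.LOCC_comp) (simp_all add: Ks_def Ls_def)
  moreover have "[0..<length Ks] = [0, 1]"
    by (simp add: Ks_def upt_rec)
  ultimately have LOCC: "LOCC n 4 [\<lambda>i. mmul 4 idm (on_party p A i), \<lambda>i. mmul 4 (P i) (on_party p (mmul 4 A swap4) i)]"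
    by (simp add: Ks_def Ls_def)
  have "prod_apply n 4 (\<lambda>i. mmul 4 idm (on_party p A i)) = prod_apply n 4 (on_party p A)"
    by (intro ext prod_apply_cong) (simp_all add: mmul_idm_left)
  moreover have "prod_apply n 4 (\<lambda>i. mmul 4 (P i) (on_party p (mmul 4 A swap4) i)) v
      = prod_apply n 4 (on_party p A) (prod_apply n 4 (\<lambda>i. swap4) v)" for v
  proof -
    have "mmul 4 (P i) (on_party p (mmul 4 A swap4) i) a b = mmul 4 (on_party p A i) swap4 a b"
      if "i < n" "a < 4" "b < 4" for i a b
    proof -
      have "mmul 4 (P i) (on_party p (mmul 4 A swap4) i) a b
          = mmul 4 (if i = p then idm else swap4) (on_party p (mmul 4 A swap4) i) a b"
        using P(2) that by (intro mmul_cong) auto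
      then show ?thesis
        using that by (auto simp: mmul_idm_left mmul_idm_right)
    qed
    then show ?thesis
      by (simp add: prod_apply_mmul) (intro prod_apply_cong, simp_all)
  qed
  ultimately show ?thesis
    using LOCC by blast
qed

section \<open>Local instruments from Gram matrices\<close>

lemma sum_cmod_sq_eq_gram:
  "of_real (\<Sum>a<d. (cmod (\<Sum>b<d. A a b * v b))\<^sup>2) = (\<Sum>b<d. \<Sum>b'<d. v b * cnj (v b') * mmul d (adj d A) A b' b)"
proof -
  have "complex_of_real (\<Sum>a<d. (cmod (\<Sum>b<d. A a b * v b))\<^sup>2)
      = (\<Sum>a<d. (\<Sum>b<d. A a b * v b) * (\<Sum>b'<d. cnj (A a b') * cnj (v b')))"
    by (simp only: of_real_sum complex_norm_square cnj_sum complex_cnj_mult)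
  also have "\<dots> = (\<Sum>a<d. \<Sum>b<d. \<Sum>b'<d. v b * cnj (v b') * (cnj (A a b') * A a b))"
    by (simp add: sum_product mult_ac)
  also have "\<dots> = (\<Sum>b<d. \<Sum>b'<d. \<Sum>a<d. v b * cnj (v b') * (cnj (A a b') * A a b))"
    by (subst sum.swap) (rule sum.cong[OF refl], rule sum.swap)
  also have "\<dots> = (\<Sum>b<d. \<Sum>b'<d. v b * cnj (v b') * mmul d (adj d A) A b' b)"
    by (simp add: mmul_def adj_def sum_distrib_left)
  finally show ?thesis .
qed

lemma local_instr_if_gram_diag:
  assumes gram: "\<And>b b'. b < d \<Longrightarrow> b' < d \<Longrightarrow>
      (\<Sum>A\<leftarrow>As. mmul d (adj d A) A b b') = (if b = b' then of_real (D b) else 0)"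
    and D: "\<And>b. b < d \<Longrightarrow> D b \<le> 1"
  shows "local_instr d As"
  unfolding local_instr_def
proof
  fix v :: "nat \<Rightarrow> complex"
  define F where "F A = (\<Sum>a<d. (cmod (\<Sum>b<d. A a b * v b))\<^sup>2)" for A
  have F: "of_real (F A) = (\<Sum>b<d. \<Sum>b'<d. v b * cnj (v b') * mmul d (adj d A) A b' b)" for A
    unfolding F_def by (rule sum_cmod_sq_eq_gram)
  have "of_real (\<Sum>A\<leftarrow>As. F A) = (\<Sum>b<d. \<Sum>b'<d. v b * cnj (v b') * (\<Sum>A\<leftarrow>As. mmul d (adj d A) A b' b))"
    by (induction As) (simp_all add: F distrib_left sum.distrib)
  also have "\<dots> = (\<Sum>b<d. \<Sum>b'<d. if b' = b then v b * cnj (v b') * of_real (D b) else 0)"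
    using gram by (intro sum.cong refl) auto
  also have "\<dots> = (\<Sum>b<d. v b * cnj (v b) * of_real (D b))"
    by (simp add: sum.delta)
  also have "\<dots> = of_real (\<Sum>b<d. D b * (cmod (v b))\<^sup>2)"
    by (simp only: of_real_sum of_real_mult complex_norm_square) (simp add: mult_ac)
  finally have "(\<Sum>A\<leftarrow>As. \<Sum>a<d. (cmod (\<Sum>b<d. A a b * v b))\<^sup>2) = (\<Sum>b<d. D b * (cmod (v b))\<^sup>2)"
    unfolding F_def using of_real_eq_iff by blast
  also have "\<dots> \<le> (\<Sum>b<d. (cmod (v b))\<^sup>2)"
  proof (rule sum_mono)
    fix b assume "b \<in> {..<d}"
    then show "D b * (cmod (v b))\<^sup>2 \<le> (cmod (v b))\<^sup>2"
      using D[of b] mult_right_mono[of "D b" 1 "(cmod (v b))\<^sup>2"] by simp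
  qed
  finally show "(\<Sum>A\<leftarrow>As. \<Sum>a<d. (cmod (\<Sum>b<d. A a b * v b))\<^sup>2) \<le> (\<Sum>a<d. (cmod (v a))\<^sup>2)" .
qed

lemma col_norm_sq_eq_gram:
  assumes "mmul d (adj d A) A b b = of_real x"
  shows "(\<Sum>a<d. (cmod (A a b))\<^sup>2) = x"
proof -
  have "of_real (\<Sum>a<d. (cmod (A a b))\<^sup>2) = (\<Sum>a<d. cnj (A a b) * A a b)"
    by (simp only: of_real_sum complex_norm_square) (simp add: mult.commute)
  also have "\<dots> = of_real x"
    using assms by (simp add: mmul_def adj_def)
  finally show ?thesis
    using of_real_eq_iff by blast
qed

lemma gram_smult:
  "mmul d (adj d (\<lambda>a b. c * A a b)) (\<lambda>a b. c * A a b) b b' = of_real ((cmod c)\<^sup>2) * mmul d (adj d A) A b b'"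
  unfolding complex_norm_square by (simp add: mmul_def adj_def sum_distrib_left mult_ac)

lemma gram_kron:
  "mmul 4 (adj 4 (kron A B)) (kron A B) a b = kron (mmul 2 (adj 2 A) A) (mmul 2 (adj 2 B) B) a b"
  by (simp add: adj_kron mmul_kron)

lemma mmul_swap4: "b < 4 \<Longrightarrow> mmul 4 A swap4 a b = A a (2 * (b mod 2) + b div 2)"
  by (auto simp: mmul_def sum_lessThan_4 swap4_def)

lemma gram_mmul_swap4:
  assumes "b < 4" "b' < 4"
  shows "mmul 4 (adj 4 (mmul 4 A swap4)) (mmul 4 A swap4) b b'
    = mmul 4 (adj 4 A) A (2 * (b mod 2) + b div 2) (2 * (b' mod 2) + b' div 2)"
proof -
  have "mmul 4 (adj 4 (mmul 4 A swap4)) (mmul 4 A swap4) b b'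
      = (\<Sum>c<4. cnj (A c (2 * (b mod 2) + b div 2)) * A c (2 * (b' mod 2) + b' div 2))"
    unfolding mmul_def[of 4 "adj 4 (mmul 4 A swap4)"] unfolding adj_def using assms by (simp add: mmul_swap4)
  then show ?thesis
    by (simp add: mmul_def adj_def)
qed

section \<open>Maximal success probabilities\<close>

lemma max_succ_eqI:
  assumes "\<And>Ms. sep_op n d Ms \<Longrightarrow> succ_prob n d Ms a b \<le> x" "sep_op n d Ms0" "succ_prob n d Ms0 a b = x"
  shows "max_succ n d a b = x"
  unfolding max_succ_def by (rule cSup_eq_maximum) (use assms in auto)

lemma succ_prob_all_branches:
  assumes "\<forall>M\<in>set Ms. prod_apply n d M a = (\<lambda>ys. c * w ys)" and "N \<noteq> 0"
  shows "succ_prob n d Ms a (\<lambda>ys. w ys / of_real N) = length Ms * (cmod c)\<^sup>2 * (vnorm n d w)\<^sup>2"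
proof -
  have "proportional n d (\<lambda>ys. c * w ys) (\<lambda>ys. w ys / of_real N)"
    unfolding proportional_def using assms(2) by (intro exI[of _ "c * of_real N"]) simp
  then show ?thesis
    using assms(1) unfolding succ_prob_def
    by (simp add: filter_True sum_list_triv vnorm_smult power_mult_distrib cong: map_cong)
qed

lemma max_succ_single_copy:
  assumes n: "0 < n" and supp: "\<forall>xs. xs \<notin> Bas n d \<longrightarrow> psi xs = 0"
    and stab: "stabilizer n d psi = {prod_apply n d (\<lambda>i. idm)}" and p: "p < n" and h: "h \<in> GL d"
    and gram: "\<And>b b'. b < d \<Longrightarrow> b' < d \<Longrightarrow> mmul d (adj d h) h b b' = (if b = b' then of_real (D b) else 0)"
    and D: "\<And>b. b < d \<Longrightarrow> D b \<le> 1" and e: "e < d" "D e = 1"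
    and N: "N = vnorm n d (prod_apply n d (on_party p h) psi)" and N_pos: "N > 0"
  shows "max_succ n d psi (\<lambda>ys. prod_apply n d (on_party p h) psi ys / of_real N) = N\<^sup>2"
proof (rule max_succ_eqI)
  have "(\<Sum>a<d. (cmod (h a e))\<^sup>2) = 1"
    using gram[OF e(1) e(1)] e(2) by (simp add: col_norm_sq_eq_gram)
  then show "succ_prob n d Ms psi (\<lambda>ys. prod_apply n d (on_party p h) psi ys / of_real N) \<le> N\<^sup>2"
    if "sep_op n d Ms" for Ms
    using succ_prob_le_trivial_stabilizer[OF n supp stab p h e(1) _ N that] by blast
  have "LOCC n d [on_party p h]"
    using p gram D by (intro LOCC_on_party local_instr_if_gram_diag) simp_all
  then show "sep_op n d [on_party p h]"
    using e(1) by (intro LOCC_imp_sep_op) auto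
  show "succ_prob n d [on_party p h] psi (\<lambda>ys. prod_apply n d (on_party p h) psi ys / of_real N) = N\<^sup>2"
    using succ_prob_all_branches[of "[on_party p h]" n d psi 1] N N_pos by simp
qed

text \<open>Since \<open>2 \<epsilon> \<le> 1 + \<epsilon>\<^sup>2\<close>, measuring \<open>{K, K \<cdot> SWAP} / \<surd>(1 + \<epsilon>\<^sup>2)\<close> is a valid instrument.\<close>

lemma local_instr_measure_swap:
  fixes eps :: real
  assumes gram: "\<And>b b'. b < 4 \<Longrightarrow> b' < 4 \<Longrightarrow> mmul 4 (adj 4 K) K b b' = (if b = b' then of_real (D b) else 0)"
    and D: "D 0 = eps" "D 1 = 1" "D 2 = eps\<^sup>2" "D 3 = eps"
    and c: "(cmod c)\<^sup>2 = 1 / (1 + eps\<^sup>2)"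
  shows "local_instr 4 [(\<lambda>a b. c * K a b), mmul 4 (\<lambda>a b. c * K a b) swap4]"
proof (rule local_instr_if_gram_diag)
  fix b b' :: nat assume b: "b < 4" "b' < 4"
  let ?s = "\<lambda>b::nat. 2 * (b mod 2) + b div 2"
  have "b \<in> {0, 1, 2, 3}" "b' \<in> {0, 1, 2, 3}"
    using b by auto
  then have s: "?s b < 4" "?s b' < 4" "?s b = ?s b' \<longleftrightarrow> b = b'"
    by auto
  have "(\<Sum>A\<leftarrow>[(\<lambda>a b. c * K a b), mmul 4 (\<lambda>a b. c * K a b) swap4]. mmul 4 (adj 4 A) A b b')
      = of_real ((cmod c)\<^sup>2) * mmul 4 (adj 4 K) K b b' + of_real ((cmod c)\<^sup>2) * mmul 4 (adj 4 K) K (?s b) (?s b')"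
    using b by (simp add: gram_mmul_swap4 gram_smult)
  then show "(\<Sum>A\<leftarrow>[(\<lambda>a b. c * K a b), mmul 4 (\<lambda>a b. c * K a b) swap4]. mmul 4 (adj 4 A) A b b')
      = (if b = b' then of_real ((cmod c)\<^sup>2 * (D b + D (?s b))) else 0)"
    using gram b s by (simp add: algebra_simps)
next
  fix b :: nat assume "b < 4"
  then have "b = 0 \<or> b = 1 \<or> b = 2 \<or> b = 3"
    by auto
  moreover have "2 * eps \<le> 1 + eps\<^sup>2"
    using sum_squares_bound[of 1 eps] by (simp add: power2_eq_square)
  moreover have "D (Suc 0) = 1" "D (Suc (Suc 0)) = eps\<^sup>2" "D (Suc (Suc (Suc 0))) = eps"
    using D by (simp_all add: eval_nat_numeral)
  moreover have "1 + eps\<^sup>2 > 0"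
    by (simp add: add_pos_nonneg)
  ultimately show "(cmod c)\<^sup>2 * (D b + D (2 * (b mod 2) + b div 2)) \<le> 1"
    by (elim disjE) (simp_all add: c D field_simps)
qed

lemma max_succ_two_copy:
  fixes eps :: real
  assumes n: "0 < n" and supp: "\<forall>xs. xs \<notin> Bas n 4 \<longrightarrow> Phi xs = 0"
    and stab: "stabilizer n 4 Phi = {prod_apply n 4 (\<lambda>i. idm), prod_apply n 4 (\<lambda>i. swap4)}"
    and p: "p < n" and K: "K \<in> GL 4"
    and gram: "\<And>b b'. b < 4 \<Longrightarrow> b' < 4 \<Longrightarrow> mmul 4 (adj 4 K) K b b' = (if b = b' then of_real (D b) else 0)"
    and D: "D 0 = eps" "D 1 = 1" "D 2 = eps\<^sup>2" "D 3 = eps"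
    and N: "N = vnorm n 4 (prod_apply n 4 (on_party p K) Phi)" and N_pos: "N > 0"
  shows "max_succ n 4 Phi (\<lambda>ys. prod_apply n 4 (on_party p K) Phi ys / of_real N) = 2 / (1 + eps\<^sup>2) * N\<^sup>2
    \<and> (\<exists>Ms. LOCC n 4 Ms \<and>
        succ_prob n 4 Ms Phi (\<lambda>ys. prod_apply n 4 (on_party p K) Phi ys / of_real N) = 2 / (1 + eps\<^sup>2) * N\<^sup>2)"
proof -
  let ?target = "\<lambda>ys. prod_apply n 4 (on_party p K) Phi ys / of_real N"
  define c where "c = complex_of_real (1 / sqrt (1 + eps\<^sup>2))"
  have "(cmod c)\<^sup>2 = (1 / sqrt (1 + eps\<^sup>2))\<^sup>2"
    unfolding c_def norm_of_real by simp
  also have "\<dots> = 1 / (1 + eps\<^sup>2)"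
    by (simp add: power_divide add_pos_nonneg)
  finally have c: "(cmod c)\<^sup>2 = 1 / (1 + eps\<^sup>2)" .
  obtain M1 M2 where M: "LOCC n 4 [M1, M2]" "prod_apply n 4 M1 = prod_apply n 4 (on_party p (\<lambda>a b. c * K a b))"
    "\<forall>v. prod_apply n 4 M2 v = prod_apply n 4 (on_party p (\<lambda>a b. c * K a b)) (prod_apply n 4 (\<lambda>i. swap4) v)"
    using LOCC_measure_and_correct[OF p local_instr_measure_swap[OF gram D c]] by blast
  have "prod_apply n 4 (on_party p (\<lambda>a b. c * K a b)) Phi
      = prod_apply n 4 ((on_party p K)(p := (\<lambda>a b. c * on_party p K p a b))) Phi"
    by (rule prod_apply_cong) simp_all
  also have "\<dots> = (\<lambda>ys. c * prod_apply n 4 (on_party p K) Phi ys)"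
    by (rule prod_apply_scale_party[OF p])
  finally have cK: "prod_apply n 4 (on_party p (\<lambda>a b. c * K a b)) Phi = (\<lambda>ys. c * prod_apply n 4 (on_party p K) Phi ys)" .
  have "prod_apply n 4 (\<lambda>i. swap4) Phi = Phi"
    using stab stabilizer_fixes by blast
  then have succ: "succ_prob n 4 [M1, M2] Phi ?target = 2 / (1 + eps\<^sup>2) * N\<^sup>2"
    using succ_prob_all_branches[of "[M1, M2]" n 4 Phi c] M(2,3) cK N N_pos c by simp
  have "succ_prob n 4 Ms Phi ?target \<le> 2 / (1 + eps\<^sup>2) * N\<^sup>2" if "sep_op n 4 Ms" for Ms
    using succ_prob_le_swap_stabilizer[OF n supp stab p K _ _ _ N that] gram D
    by (simp add: col_norm_sq_eq_gram add_pos_nonneg)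
  then have "max_succ n 4 Phi ?target = 2 / (1 + eps\<^sup>2) * N\<^sup>2"
    using LOCC_imp_sep_op[OF M(1)] succ by (intro max_succ_eqI) auto
  then show ?thesis
    using M(1) succ by blast
qed

lemma two_copy_on_party:
  "two_copy n (prod_apply n 2 (on_party p A) phi) (prod_apply n 2 (on_party p B) chi)
     = prod_apply n 4 (on_party p (kron A B)) (two_copy n phi chi)"
proof -
  have "prod_apply n 4 (\<lambda>i. kron (on_party p A i) (on_party p B i)) = prod_apply n 4 (on_party p (kron A B))"
    by (intro ext prod_apply_cong) (simp_all add: kron_idm)
  then show ?thesis
    by (simp add: two_copy_kron[symmetric])
qed

lemma gram_kron_diag:
  assumes "\<And>a a'. a < 2 \<Longrightarrow> a' < 2 \<Longrightarrow> mmul 2 (adj 2 A) A a a' = (if a = a' then of_real (f a) else 0)"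
    and "\<And>a a'. a < 2 \<Longrightarrow> a' < 2 \<Longrightarrow> mmul 2 (adj 2 B) B a a' = (if a = a' then of_real (g a) else 0)"
    and "b < 4" "b' < 4"
  shows "mmul 4 (adj 4 (kron A B)) (kron A B) b b' = (if b = b' then of_real (f (b div 2) * g (b mod 2)) else 0)"
proof -
  have "b = b' \<longleftrightarrow> b div 2 = b' div 2 \<and> b mod 2 = b' mod 2"
    by (metis div_mod_decomp)
  moreover have "b div 2 < 2" "b' div 2 < 2" "b mod 2 < 2" "b' mod 2 < 2"
    using assms(3,4) by auto
  ultimately show ?thesis
    unfolding gram_kron using assms(1,2) by (auto simp: kron_def)
qed

lemma max_succ_two_copy_kron:
  fixes eps :: real
  assumes n: "0 < n" and supp: "\<forall>xs. xs \<notin> Bas n 2 \<longrightarrow> psi xs = 0"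
    and stab: "stabilizer n 4 (two_copy n psi psi) = {prod_apply n 4 (\<lambda>i. idm), prod_apply n 4 (\<lambda>i. swap4)}"
    and p: "p < n" and h1: "h1 \<in> GL 2" and h2: "h2 \<in> GL 2" and eps: "0 \<le> eps"
    and gram1: "\<And>a a'. a < 2 \<Longrightarrow> a' < 2 \<Longrightarrow>
      mmul 2 (adj 2 h1) h1 a a' = (if a = a' then of_real (if a = 0 then 1 else eps) else 0)"
    and gram2: "\<And>a a'. a < 2 \<Longrightarrow> a' < 2 \<Longrightarrow>
      mmul 2 (adj 2 h2) h2 a a' = (if a = a' then of_real (if a = 0 then eps else 1) else 0)"
    and N: "N = vnorm n 2 (prod_apply n 2 (on_party p h1) psi) * vnorm n 2 (prod_apply n 2 (on_party p h2) psi)"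
    and N_pos: "N > 0"
  defines "target \<equiv> \<lambda>ys. two_copy n (prod_apply n 2 (on_party p h1) psi) (prod_apply n 2 (on_party p h2) psi) ys
    / of_real N"
  shows "max_succ n 4 (two_copy n psi psi) target = 2 / (1 + eps\<^sup>2) * N\<^sup>2
    \<and> (\<exists>Ms. LOCC n 4 Ms \<and> succ_prob n 4 Ms (two_copy n psi psi) target = 2 / (1 + eps\<^sup>2) * N\<^sup>2)"
  unfolding target_def two_copy_on_party
proof (rule max_succ_two_copy[OF n _ stab p kron_GL[OF h1 h2] gram_kron_diag[OF gram1 gram2]])
  show "N = vnorm n 4 (prod_apply n 4 (on_party p (kron h1 h2)) (two_copy n psi psi))"
    unfolding N two_copy_on_party[symmetric] vnorm_two_copy ..
qed (use supp N_pos in \<open>simp_all add: two_copy_outside power2_eq_square\<close>)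

lemma less_two_div_one_plus_sq:
  fixes eps x :: real
  assumes "0 < eps" "eps < 1" "x > 0"
  shows "x < 2 / (1 + eps\<^sup>2) * x"
proof -
  have "eps * eps < 1 * 1"
    using assms by (intro mult_strict_mono) auto
  then have "1 < 2 / (1 + eps\<^sup>2)"
    by (simp add: field_simps power2_eq_square add_pos_nonneg)
  then show ?thesis
    using assms(3) mult_strict_right_mono[of 1 "2 / (1 + eps\<^sup>2)" x] by simp
qed

theorem mainTheorem6:
  fixes n :: nat and psi :: vec and eps :: real and h1 h2 :: lmat
  assumes n_pos: "n \<ge> 1"
    and psi_supp: "\<forall>xs. xs \<notin> Bas n 2 \<longrightarrow> psi xs = 0"
    and psi_norm: "vnorm n 2 psi = 1"
    and stab: "stabilizer n 4 (two_copy n psi psi) =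
               {prod_apply n 4 (\<lambda>i. idm), prod_apply n 4 (\<lambda>i. swap4)}"
    and eps: "0 < eps" "eps < 1"
    and h1_GL: "h1 \<in> GL 2" and h2_GL: "h2 \<in> GL 2"
    and H1: "\<forall>a<2. \<forall>b<2. mmul 2 (adj 2 h1) h1 a b =
               (if a = b then (if a = 0 then 1 else complex_of_real eps) else 0)"
    and H2: "\<forall>a<2. \<forall>b<2. mmul 2 (adj 2 h2) h2 a b =
               (if a = b then (if a = 0 then complex_of_real eps else 1) else 0)"
  defines "psi1 \<equiv> prod_apply n 2 (\<lambda>i. if i = n - 1 then h1 else idm) psi"
    and "psi2 \<equiv> prod_apply n 2 (\<lambda>i. if i = n - 1 then h2 else idm) psi"
    and "n1 \<equiv> vnorm n 2 (prod_apply n 2 (\<lambda>i. if i = n - 1 then h1 else idm) psi)"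
    and "n2 \<equiv> vnorm n 2 (prod_apply n 2 (\<lambda>i. if i = n - 1 then h2 else idm) psi)"
  shows "max_succ n 4 (two_copy n psi psi)
           (\<lambda>ys. two_copy n psi1 psi2 ys / complex_of_real (n1 * n2))
           = 2 / (1 + eps\<^sup>2) * (n1 * n2)\<^sup>2
       \<and> (\<exists>Ms. LOCC n 4 Ms \<and>
            succ_prob n 4 Ms (two_copy n psi psi)
              (\<lambda>ys. two_copy n psi1 psi2 ys / complex_of_real (n1 * n2))
            = 2 / (1 + eps\<^sup>2) * (n1 * n2)\<^sup>2)
       \<and> 2 / (1 + eps\<^sup>2) * (n1 * n2)\<^sup>2 > (n1 * n2)\<^sup>2
       \<and> max_succ n 2 psi (\<lambda>ys. psi1 ys / complex_of_real n1)
           * max_succ n 2 psi (\<lambda>ys. psi2 ys / complex_of_real n2) = (n1 * n2)\<^sup>2"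
proof -
  have n: "0 < n" and p: "n - 1 < n"
    using n_pos by auto
  have pos: "n1 > 0" "n2 > 0"
    unfolding n1_def n2_def using vnorm_on_party_pos[OF p _ psi_supp] h1_GL h2_GL psi_norm by auto
  have gram1: "mmul 2 (adj 2 h1) h1 a a' = (if a = a' then of_real (if a = 0 then 1 else eps) else 0)"
    and gram2: "mmul 2 (adj 2 h2) h2 a a' = (if a = a' then of_real (if a = 0 then eps else 1) else 0)"
    if "a < 2" "a' < 2" for a a'
    using H1 H2 that by auto
  have trivial: "stabilizer n 2 psi = {prod_apply n 2 (\<lambda>i. idm)}"
    by (rule stabilizer_trivial_if_two_copy[OF stab psi_supp n])
  have "max_succ n 2 psi (\<lambda>ys. psi1 ys / of_real n1) = n1\<^sup>2"
    unfolding psi1_def using gram1 eps pos(1)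
    by (intro max_succ_single_copy[OF n psi_supp trivial p h1_GL, where D = "\<lambda>a. if a = 0 then 1 else eps" and e = 0])
      (simp_all add: n1_def)
  moreover have "max_succ n 2 psi (\<lambda>ys. psi2 ys / of_real n2) = n2\<^sup>2"
    unfolding psi2_def using gram2 eps pos(2)
    by (intro max_succ_single_copy[OF n psi_supp trivial p h2_GL, where D = "\<lambda>a. if a = 0 then eps else 1" and e = 1])
      (simp_all add: n2_def)
  moreover have "(n1 * n2)\<^sup>2 < 2 / (1 + eps\<^sup>2) * (n1 * n2)\<^sup>2"
    using eps pos by (intro less_two_div_one_plus_sq) auto
  ultimately show ?thesis
    using max_succ_two_copy_kron[OF n psi_supp stab p h1_GL h2_GL _ gram1 gram2 _ mult_pos_pos[OF pos]] eps
    unfolding psi1_def psi2_def n1_def n2_def by (simp add: power_mult_distrib)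
qed

end
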